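(* Assume the setting described in the context. If $\epsilon_{\mathbf 0}$ has a probability density $p_\epsilon$ which exists and is Lipschitz continuous, then Condition D holds.
   Context: Let $d\in\mathbb N$. For $i,k\in\mathbb Z^d$ write $i\succeq k$ if $i_\tau\ge k_\tau$ for all $\tau$; $\mathbf 0=(0,\dots,0)$; $[\![a,b]\!]=\{a,\dots,b\}$. Let $(\epsilon_i)_{i\in\mathbb Z^d}$ be i.i.d. real random variables with mean zero and finite second moment, $(a_k)_{k\succeq\mathbf 0}$ real with $\sum a_k^2<\infty$, and $X_i=\sum_{k\succeq\mathbf 0}a_k\epsilon_{i-k}$. For $m\in\mathbb N$, $X_{i,m}=\sum_{k\in[\![0,m-1]\!]^d}a_k\epsilon_{i-k}$. Let $p,p_m$ denote the densities of $X_{\mathbf 0},X_{\mathbf 0,m}$, and for $i\ne\mathbf 0$ let $p_i,p_{i,m}$ denote the joint densities of $(X_{\mathbf 0},X_i)$ and $(X_{\mathbf 0,m},X_{i,m})$. Condition D: (i) the densities $p$ and $p_m$ ($m\in\mathbb N$) exist and are Lipschitz with a common constant $c_0<\infty$ independent of $m$, and $\sup_xp(x)<\infty$, $\sup_m\sup_xp_m(x)<\infty$; (ii) the joint densities $p_i$ and $p_{i,m}$ exist for all $i\ne\mathbf 0$, $m\in\mathbb N$, and $\sup_{i\ne\mathbf 0}\sup_{x,y}p_i(x,y)<\infty$, $\sup_m\sup_{i\ne\mathbf 0}\sup_{x,y}p_{i,m}(x,y)<\infty$.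
   Formalization: Lemma 1 carries the further hypothesis $a_{\mathbf 0}\ne 0$ on the coefficient of $\epsilon_{\mathbf 0}$ in $X_{\mathbf 0}$. The statement above fails without it. *)

theory Defs
  imports "HOL-Probability.Probability"
begin

definition vge :: "int ^ 'd::finite \<Rightarrow> int ^ 'd \<Rightarrow> bool" where
  "vge i k \<longleftrightarrow> (\<forall>\<tau>. k $ \<tau> \<le> i $ \<tau>)"

definition cube :: "nat \<Rightarrow> (int ^ 'd::finite) set" where
  "cube m = {k. \<forall>\<tau>. 0 \<le> k $ \<tau> \<and> k $ \<tau> \<le> int m - 1}"

definition Xtr :: "(int ^ 'd::finite \<Rightarrow> real) \<Rightarrow> (int ^ 'd \<Rightarrow> 'a \<Rightarrow> real)
    \<Rightarrow> int ^ 'd \<Rightarrow> nat \<Rightarrow> 'a \<Rightarrow> real" where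
  "Xtr a \<epsilon> i m \<omega> = (\<Sum>k\<in>cube m. a k * \<epsilon> (i - k) \<omega>)"

text \<open>The linear field X_i = sum over k succeq 0 of a_k eps_{i-k}, realised as the
  (almost sure, and L2) limit of the cube partial sums.\<close>
definition Xlin :: "(int ^ 'd::finite \<Rightarrow> real) \<Rightarrow> (int ^ 'd \<Rightarrow> 'a \<Rightarrow> real)
    \<Rightarrow> int ^ 'd \<Rightarrow> 'a \<Rightarrow> real" where
  "Xlin a \<epsilon> i \<omega> = lim (\<lambda>m. Xtr a \<epsilon> i m \<omega>)"

definition conditionD :: "'a measure \<Rightarrow> (int ^ 'd::finite \<Rightarrow> real)
    \<Rightarrow> (int ^ 'd \<Rightarrow> 'a \<Rightarrow> real) \<Rightarrow> bool" where
  "conditionD M a \<epsilon> \<longleftrightarrow>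
    (\<exists>(p :: real \<Rightarrow> real) (pm :: nat \<Rightarrow> real \<Rightarrow> real) (c0 :: real).
       (\<forall>x. 0 \<le> p x) \<and>
       distributed M lborel (Xlin a \<epsilon> 0) (\<lambda>x. ennreal (p x)) \<and>
       lipschitz_on c0 UNIV p \<and>
       (\<forall>m\<ge>1. (\<forall>x. 0 \<le> pm m x) \<and>
          distributed M lborel (Xtr a \<epsilon> 0 m) (\<lambda>x. ennreal (pm m x)) \<and>
          lipschitz_on c0 UNIV (pm m)) \<and>
       bdd_above (range p) \<and>
       bdd_above {pm m x | m x. m \<ge> 1}) \<and>
    (\<exists>(q :: int ^ 'd \<Rightarrow> real \<times> real \<Rightarrow> real) (qm :: nat \<Rightarrow> int ^ 'd \<Rightarrow> real \<times> real \<Rightarrow> real).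
       (\<forall>i. i \<noteq> 0 \<longrightarrow> (\<forall>xy. 0 \<le> q i xy) \<and>
          distributed M (lborel \<Otimes>\<^sub>M lborel) (\<lambda>\<omega>. (Xlin a \<epsilon> 0 \<omega>, Xlin a \<epsilon> i \<omega>))
            (\<lambda>xy. ennreal (q i xy))) \<and>
       (\<forall>m\<ge>1. \<forall>i. i \<noteq> 0 \<longrightarrow> (\<forall>xy. 0 \<le> qm m i xy) \<and>
          distributed M (lborel \<Otimes>\<^sub>M lborel) (\<lambda>\<omega>. (Xtr a \<epsilon> 0 m \<omega>, Xtr a \<epsilon> i m \<omega>))
            (\<lambda>xy. ennreal (qm m i xy))) \<and>
       bdd_above {q i xy | i xy. i \<noteq> 0} \<and>
       bdd_above {qm m i xy | m i xy. m \<ge> 1 \<and> i \<noteq> 0})"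

end

theory Submission
  imports Defs
begin

text \<open>Write \<open>X\<^sub>0 = a\<^sub>0 \<epsilon>\<^sub>0 + W\<close>, where \<open>W\<close> is a measurable function of the innovations
  other than \<open>\<epsilon>\<^sub>0\<close> and hence independent of \<open>\<epsilon>\<^sub>0\<close>. The law of \<open>X\<^sub>0\<close> is then the law of
  \<open>a\<^sub>0 \<epsilon>\<^sub>0\<close> convolved with that of \<open>W\<close>, and its density \<open>x \<mapsto> E p\<^sub>\<epsilon>((x - W)/a\<^sub>0)/|a\<^sub>0|\<close>
  inherits the Lipschitz constant \<open>L/a\<^sub>0\<^sup>2\<close> and the bound \<open>sup p\<^sub>\<epsilon>/|a\<^sub>0|\<close>; a Lipschitz
  probability density is automatically bounded. For a pair \<open>(X\<^sub>0, X\<^sub>i)\<close> with \<open>i \<noteq> 0\<close>, at most one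
  of \<open>a\<^sub>i, a\<^sub>-\<^sub>i\<close> can be nonzero because \<open>a\<close> lives on the positive orthant, so up to order the pair
  is \<open>(a\<^sub>0 \<epsilon>\<^sub>j\<^sub>1 + c \<epsilon>\<^sub>j\<^sub>2 + U, a\<^sub>0 \<epsilon>\<^sub>j\<^sub>2 + V)\<close> with \<open>(U, V)\<close> independent of \<open>(\<epsilon>\<^sub>j\<^sub>1, \<epsilon>\<^sub>j\<^sub>2)\<close>;
  integrating out \<open>\<epsilon>\<^sub>j\<^sub>1\<close> and then \<open>\<epsilon>\<^sub>j\<^sub>2\<close> gives a joint density bounded by \<open>(sup p\<^sub>\<epsilon>/|a\<^sub>0|)\<^sup>2\<close>.
  All these bounds are uniform in the truncation level \<open>m\<close>. The infinite field is the almost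
  sure limit of the truncations by Kolmogorov's maximal inequality, which lets the same
  decomposition pass to the limit.\<close>

section \<open>Independent blocks of random variables\<close>

context prob_space begin

lemma indep_var_restrict_compose:
  assumes ind: "indep_vars (\<lambda>_. borel) X I" and AB: "A \<inter> B = {}" "A \<subseteq> I" "B \<subseteq> I"
    and f: "f \<in> measurable (PiM A (\<lambda>_. borel)) N1" and g: "g \<in> measurable (PiM B (\<lambda>_. borel)) N2"
  shows "indep_var N1 (\<lambda>\<omega>. f (\<lambda>i\<in>A. X i \<omega>)) N2 (\<lambda>\<omega>. g (\<lambda>i\<in>B. X i \<omega>))"
  using indep_var_compose[OF indep_var_restrict[OF ind AB] f g] by (simp add: comp_def)

lemma indep_var_cong:
  assumes iv: "indep_var N1 X1 N2 X2" and e1: "\<And>x. x\<in>space M \<Longrightarrow> X1 x = Y1 x"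
    and e2: "\<And>x. x\<in>space M \<Longrightarrow> X2 x = Y2 x"
  shows "indep_var N1 Y1 N2 Y2"
proof -
  have p1: "X1 -` A \<inter> space M = Y1 -` A \<inter> space M" for A using e1 by auto
  have p2: "X2 -` A \<inter> space M = Y2 -` A \<inter> space M" for A using e2 by auto
  have m1: "random_variable N1 Y1" using indep_var_rv1[OF iv] e1 measurable_cong by metis
  have m2: "random_variable N2 Y2" using indep_var_rv2[OF iv] e2 measurable_cong by metis
  have eq: "(\<lambda>i. {case_bool X1 X2 i -` A \<inter> space M |A. A \<in> sets (case_bool N1 N2 i)}) =
     (\<lambda>i. {case_bool Y1 Y2 i -` A \<inter> space M |A. A \<in> sets (case_bool N1 N2 i)})"
    by (rule ext) (auto split: bool.split simp: p1 p2)
  show ?thesis using iv m1 m2 unfolding indep_var_def indep_vars_def2 eq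
    by (auto split: bool.split)
qed

lemma indep_vars_restrict_compose:
  fixes Z :: "'j \<Rightarrow> 'a \<Rightarrow> real"
  assumes ind: "indep_vars (\<lambda>_. borel) X UNIV" and K: "disjoint_family K"
    and g: "\<And>n. g n \<in> borel_measurable (PiM (K n) (\<lambda>_. borel))"
    and Z: "\<And>n \<omega>. Z n \<omega> = g n (\<lambda>j\<in>K n. X j \<omega>)"
  shows "indep_vars (\<lambda>_. borel) Z UNIV"
proof -
  have "indep_vars (\<lambda>n. PiM (K n) (\<lambda>_. borel)) (\<lambda>n \<omega>. \<lambda>j\<in>K n. X j \<omega>) UNIV"
    by (rule indep_vars_restrict[OF ind]) (use K in \<open>auto simp: disjoint_family_on_def\<close>)
  then have "indep_vars (\<lambda>_. borel) (\<lambda>n \<omega>. g n (\<lambda>j\<in>K n. X j \<omega>)) UNIV"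
    by (rule indep_vars_compose2) (use g in auto)
  moreover have "Z = (\<lambda>n \<omega>. g n (\<lambda>j\<in>K n. X j \<omega>))" by (intro ext) (rule Z)
  ultimately show ?thesis by simp
qed

lemma distr_restrict_compose_pair:
  assumes ind: "indep_vars (\<lambda>_. borel) X I" and AB: "A \<inter> B = {}" "A \<subseteq> I" "B \<subseteq> I"
    and f[measurable]: "f \<in> measurable (PiM A (\<lambda>_. borel)) N1"
    and g[measurable]: "g \<in> measurable (PiM B (\<lambda>_. borel)) N2"
  shows "distr M (N1 \<Otimes>\<^sub>M N2) (\<lambda>\<omega>. (f (\<lambda>i\<in>A. X i \<omega>), g (\<lambda>i\<in>B. X i \<omega>)))
       = distr M N1 (\<lambda>\<omega>. f (\<lambda>i\<in>A. X i \<omega>)) \<Otimes>\<^sub>M distr M N2 (\<lambda>\<omega>. g (\<lambda>i\<in>B. X i \<omega>))"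
proof -
  have iv: "indep_var (PiM A (\<lambda>_. borel)) (\<lambda>\<omega>. \<lambda>i\<in>A. X i \<omega>) (PiM B (\<lambda>_. borel)) (\<lambda>\<omega>. \<lambda>i\<in>B. X i \<omega>)"
    by (rule indep_var_restrict[OF ind AB])
  have [measurable]: "(\<lambda>\<omega>. \<lambda>i\<in>A. X i \<omega>) \<in> measurable M (PiM A (\<lambda>_. borel))"
    using indep_var_rv1[OF iv] .
  have [measurable]: "(\<lambda>\<omega>. \<lambda>i\<in>B. X i \<omega>) \<in> measurable M (PiM B (\<lambda>_. borel))"
    using indep_var_rv2[OF iv] .
  have joint: "distr M (PiM A (\<lambda>_. borel) \<Otimes>\<^sub>M PiM B (\<lambda>_. borel)) (\<lambda>\<omega>. (\<lambda>i\<in>A. X i \<omega>, \<lambda>i\<in>B. X i \<omega>))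
     = distr M (PiM A (\<lambda>_. borel)) (\<lambda>\<omega>. \<lambda>i\<in>A. X i \<omega>) \<Otimes>\<^sub>M distr M (PiM B (\<lambda>_. borel)) (\<lambda>\<omega>. \<lambda>i\<in>B. X i \<omega>)"
    using iv unfolding indep_var_distribution_eq by simp
  interpret PB0: prob_space "distr M (PiM B (\<lambda>_. borel)) (\<lambda>\<omega>. \<lambda>i\<in>B. X i \<omega>)"
    by (rule prob_space_distr) simp
  interpret PB: prob_space "distr (distr M (PiM B (\<lambda>_. borel)) (\<lambda>\<omega>. \<lambda>i\<in>B. X i \<omega>)) N2 g"
    by (rule PB0.prob_space_distr) simp
  have "distr M (N1 \<Otimes>\<^sub>M N2) (\<lambda>\<omega>. (f (\<lambda>i\<in>A. X i \<omega>), g (\<lambda>i\<in>B. X i \<omega>)))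
      = distr (distr M (PiM A (\<lambda>_. borel) \<Otimes>\<^sub>M PiM B (\<lambda>_. borel)) (\<lambda>\<omega>. (\<lambda>i\<in>A. X i \<omega>, \<lambda>i\<in>B. X i \<omega>)))
          (N1 \<Otimes>\<^sub>M N2) (\<lambda>(x, y). (f x, g y))"
    by (subst distr_distr) (auto simp: comp_def)
  also have "\<dots> = distr (distr M (PiM A (\<lambda>_. borel)) (\<lambda>\<omega>. \<lambda>i\<in>A. X i \<omega>)) N1 f
      \<Otimes>\<^sub>M distr (distr M (PiM B (\<lambda>_. borel)) (\<lambda>\<omega>. \<lambda>i\<in>B. X i \<omega>)) N2 g"
    unfolding joint by (rule pair_measure_distr[symmetric]) (auto intro: PB.sigma_finite_measure)
  also have "\<dots> = distr M N1 (\<lambda>\<omega>. f (\<lambda>i\<in>A. X i \<omega>)) \<Otimes>\<^sub>M distr M N2 (\<lambda>\<omega>. g (\<lambda>i\<in>B. X i \<omega>))"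
    by (simp add: distr_distr comp_def)
  finally show ?thesis .
qed

lemma distr_indep_two_and_rest:
  fixes X :: "'i \<Rightarrow> 'a \<Rightarrow> real" and gU gV :: "('i \<Rightarrow> real) \<Rightarrow> real"
  assumes ind: "indep_vars (\<lambda>_. borel) X UNIV" and j12: "j1 \<noteq> j2"
    and gU[measurable]: "gU \<in> borel_measurable (PiM (UNIV - {j1, j2}) (\<lambda>_. borel))"
    and gV[measurable]: "gV \<in> borel_measurable (PiM (UNIV - {j1, j2}) (\<lambda>_. borel))"
    and U_def: "\<And>\<omega>. U \<omega> = gU (\<lambda>j\<in>UNIV - {j1, j2}. X j \<omega>)"
    and V_def: "\<And>\<omega>. V \<omega> = gV (\<lambda>j\<in>UNIV - {j1, j2}. X j \<omega>)"
  shows "distr M (borel \<Otimes>\<^sub>M (borel \<Otimes>\<^sub>M (borel \<Otimes>\<^sub>M borel))) (\<lambda>\<omega>. (X j1 \<omega>, X j2 \<omega>, U \<omega>, V \<omega>))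
       = distr M borel (X j1) \<Otimes>\<^sub>M distr M (borel \<Otimes>\<^sub>M (borel \<Otimes>\<^sub>M borel)) (\<lambda>\<omega>. (X j2 \<omega>, U \<omega>, V \<omega>))"
    and "distr M (borel \<Otimes>\<^sub>M (borel \<Otimes>\<^sub>M borel)) (\<lambda>\<omega>. (X j2 \<omega>, U \<omega>, V \<omega>))
       = distr M borel (X j2) \<Otimes>\<^sub>M distr M (borel \<Otimes>\<^sub>M borel) (\<lambda>\<omega>. (U \<omega>, V \<omega>))"
proof -
  define R where "R = UNIV - {j1, j2}"
  have gUR[measurable]: "gU \<in> borel_measurable (PiM R (\<lambda>_. borel))"
    and gVR[measurable]: "gV \<in> borel_measurable (PiM R (\<lambda>_. borel))"
    using gU gV unfolding R_def by simp_all
  have [measurable]: "X j \<in> borel_measurable M" for j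
    using ind unfolding indep_vars_def by auto
  have comp1: "(\<lambda>x. x j1) \<in> borel_measurable (PiM {j1} (\<lambda>_. borel))"
    "(\<lambda>x. x j2) \<in> borel_measurable (PiM {j2} (\<lambda>_. borel))"
    by (auto intro: measurable_component_singleton)
  have r: "(\<lambda>x. restrict x R) \<in> measurable (PiM (UNIV - {j1}) (\<lambda>_. borel)) (PiM R (\<lambda>_. borel))"
    by (rule measurable_restrict_subset) (auto simp: R_def)
  have "(\<lambda>x. gU (restrict x R)) \<in> borel_measurable (PiM (UNIV - {j1}) (\<lambda>_. borel))"
    "(\<lambda>x. gV (restrict x R)) \<in> borel_measurable (PiM (UNIV - {j1}) (\<lambda>_. borel))"
    using measurable_compose[OF r gUR] measurable_compose[OF r gVR] by (simp_all add: comp_def)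
  then have "(\<lambda>x. (x j2, gU (restrict x R), gV (restrict x R)))
      \<in> measurable (PiM (UNIV - {j1}) (\<lambda>_. borel)) (borel \<Otimes>\<^sub>M (borel \<Otimes>\<^sub>M borel))"
    using j12 by (intro measurable_Pair) (auto intro: measurable_component_singleton)
  from distr_restrict_compose_pair[OF ind _ _ _ comp1(1) this]
  show "distr M (borel \<Otimes>\<^sub>M (borel \<Otimes>\<^sub>M (borel \<Otimes>\<^sub>M borel))) (\<lambda>\<omega>. (X j1 \<omega>, X j2 \<omega>, U \<omega>, V \<omega>))
       = distr M borel (X j1) \<Otimes>\<^sub>M distr M (borel \<Otimes>\<^sub>M (borel \<Otimes>\<^sub>M borel)) (\<lambda>\<omega>. (X j2 \<omega>, U \<omega>, V \<omega>))"
    using j12 by (simp add: U_def V_def R_def restrict_def cong: if_cong)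
  have "(\<lambda>x. (gU x, gV x)) \<in> measurable (PiM R (\<lambda>_. borel)) (borel \<Otimes>\<^sub>M borel)"
    by measurable
  from distr_restrict_compose_pair[OF ind _ _ _ comp1(2) this]
  show "distr M (borel \<Otimes>\<^sub>M (borel \<Otimes>\<^sub>M borel)) (\<lambda>\<omega>. (X j2 \<omega>, U \<omega>, V \<omega>))
       = distr M borel (X j2) \<Otimes>\<^sub>M distr M (borel \<Otimes>\<^sub>M borel) (\<lambda>\<omega>. (U \<omega>, V \<omega>))"
    by (simp add: U_def V_def R_def)
qed

lemma distributed_AE_cong:
  assumes "distributed M N X f" "AE \<omega> in M. X \<omega> = Y \<omega>" "Y \<in> measurable M N"
  shows "distributed M N Y f"
proof -
  have "AE \<omega> in M. Y \<omega> = X \<omega>" using assms(2) by auto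
  then have "distr M N Y = distr M N X"
    by (intro distr_cong_AE refl) (use assms in \<open>auto simp: distributed_def\<close>)
  then show ?thesis using assms by (simp add: distributed_def)
qed

lemma expectation_square_sum_indep:
  fixes Z :: "'i \<Rightarrow> 'a \<Rightarrow> real"
  assumes ind: "indep_vars (\<lambda>_. borel) Z I" and F: "finite F" "F \<subseteq> I"
    and int1: "\<And>j. j\<in>F \<Longrightarrow> integrable M (Z j)"
    and int2: "\<And>j. j\<in>F \<Longrightarrow> integrable M (\<lambda>\<omega>. (Z j \<omega>)^2)"
    and mz: "\<And>j. j\<in>F \<Longrightarrow> expectation (Z j) = 0"
  shows "integrable M (\<lambda>\<omega>. (\<Sum>j\<in>F. Z j \<omega>)^2) \<and>
         expectation (\<lambda>\<omega>. (\<Sum>j\<in>F. Z j \<omega>)^2) = (\<Sum>j\<in>F. expectation (\<lambda>\<omega>. (Z j \<omega>)^2))"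
  using F int1 int2 mz
proof (induction F rule: finite_induct)
  case empty
  then show ?case by simp
next
  case (insert x F)
  have IH: "integrable M (\<lambda>\<omega>. (\<Sum>j\<in>F. Z j \<omega>)^2)"
     "expectation (\<lambda>\<omega>. (\<Sum>j\<in>F. Z j \<omega>)^2) = (\<Sum>j\<in>F. expectation (\<lambda>\<omega>. (Z j \<omega>)^2))"
    using insert by auto
  have iS: "integrable M (\<lambda>\<omega>. \<Sum>j\<in>F. Z j \<omega>)" using insert by auto
  have ix: "integrable M (Z x)" "integrable M (\<lambda>\<omega>. (Z x \<omega>)^2)" "expectation (Z x) = 0"
    using insert by auto
  have "indep_var borel (\<lambda>\<omega>. (\<lambda>f. \<Sum>j\<in>F. f j) (\<lambda>i\<in>F. Z i \<omega>)) borel (\<lambda>\<omega>. (\<lambda>f. f x) (\<lambda>i\<in>{x}. Z i \<omega>))"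
    by (rule indep_var_restrict_compose[OF ind]) (use insert in auto)
  then have iv: "indep_var borel (\<lambda>\<omega>. \<Sum>j\<in>F. Z j \<omega>) borel (Z x)"
    by (simp cong: sum.cong)
  have "(\<lambda>\<omega>. (\<Sum>j\<in>insert x F. Z j \<omega>)^2) =
    (\<lambda>\<omega>. (\<Sum>j\<in>F. Z j \<omega>)^2 + 2 * ((\<Sum>j\<in>F. Z j \<omega>) * Z x \<omega>) + (Z x \<omega>)^2)"
    using insert by (auto simp: power2_eq_square algebra_simps)
  then show ?case
    using IH ix insert(1,2) indep_var_integrable[OF iv iS ix(1)]
      indep_var_lebesgue_integral[OF iv iS ix(1)]
    by (simp add: Bochner_Integration.integral_add)
qed

lemma expectation_square_indicator_le_add_indep:
  fixes Y T :: "'a \<Rightarrow> real"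
  assumes iv: "indep_var borel (\<lambda>\<omega>. Y \<omega> * indicator A \<omega>) borel T" and A[measurable]: "A \<in> sets M"
    and iY: "integrable M Y" "integrable M (\<lambda>\<omega>. (Y \<omega>)^2)"
    and iT: "integrable M T" "integrable M (\<lambda>\<omega>. (T \<omega>)^2)" and ET: "expectation T = 0"
  shows "expectation (\<lambda>\<omega>. (Y \<omega>)^2 * indicator A \<omega>)
           \<le> expectation (\<lambda>\<omega>. (Y \<omega> + T \<omega>)^2 * indicator A \<omega>)"
proof -
  have iYA: "integrable M (\<lambda>\<omega>. Y \<omega> * indicator A \<omega>)"
    by (rule integrable_real_mult_indicator) (use iY in auto)
  have iP: "integrable M (\<lambda>\<omega>. (Y \<omega> * indicator A \<omega>) * T \<omega>)"
    using indep_var_integrable[OF iv iYA iT(1)] .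
  have EP: "expectation (\<lambda>\<omega>. (Y \<omega> * indicator A \<omega>) * T \<omega>) = 0"
    using indep_var_lebesgue_integral[OF iv iYA iT(1)] ET by simp
  have iY2A: "integrable M (\<lambda>\<omega>. (Y \<omega>)^2 * indicator A \<omega>)"
    by (rule integrable_real_mult_indicator) (use iY in auto)
  have iT2A: "integrable M (\<lambda>\<omega>. (T \<omega>)^2 * indicator A \<omega>)"
    by (rule integrable_real_mult_indicator) (use iT in auto)
  have "(Y \<omega> + T \<omega>)^2 * indicator A \<omega> = (Y \<omega>)^2 * indicator A \<omega>
      + 2 * ((Y \<omega> * indicator A \<omega>) * T \<omega>) + (T \<omega>)^2 * indicator A \<omega>" for \<omega>
    by (simp add: power2_eq_square indicator_def algebra_simps)
  then have "expectation (\<lambda>\<omega>. (Y \<omega> + T \<omega>)^2 * indicator A \<omega>) =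
      expectation (\<lambda>\<omega>. (Y \<omega>)^2 * indicator A \<omega>) + expectation (\<lambda>\<omega>. (T \<omega>)^2 * indicator A \<omega>)"
    using iY2A iP iT2A EP by simp
  moreover have "expectation (\<lambda>\<omega>. (T \<omega>)^2 * indicator A \<omega>) \<ge> 0"
    by (rule integral_nonneg_AE) auto
  ultimately show ?thesis by linarith
qed

end

section \<open>Kolmogorov's maximal inequality\<close>

lemma first_index_in_interval:
  fixes P :: "nat \<Rightarrow> bool"
  assumes "k \<in> {n..N}" "P k"
  shows "\<exists>k0\<in>{n..N}. P k0 \<and> (\<forall>j\<in>{n..<k0}. \<not> P j)"
proof -
  define k0 where "k0 = (LEAST k. k \<in> {n..N} \<and> P k)"
  have k0: "k0 \<in> {n..N} \<and> P k0"
    unfolding k0_def by (rule LeastI[of _ k]) (use assms in auto)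
  have "\<not> P j" if "j \<in> {n..<k0}" for j
  proof
    assume "P j"
    then have "k0 \<le> j" unfolding k0_def using that k0 by (intro Least_le) auto
    then show False using that by auto
  qed
  then show ?thesis using k0 by blast
qed

lemma convergent_partial_sums_if_tails_small:
  fixes z :: "nat \<Rightarrow> real"
  assumes small: "\<And>e. e > 0 \<Longrightarrow> \<exists>n. \<forall>k\<ge>n. \<bar>\<Sum>j\<in>{n..<k}. z j\<bar> < e"
  shows "convergent (\<lambda>k. \<Sum>j<k. z j)"
proof -
  have "Cauchy (\<lambda>k. \<Sum>j<k. z j)"
  proof (rule CauchyI)
    fix e :: real assume "0 < e"
    then obtain n where n: "\<forall>k\<ge>n. \<bar>\<Sum>j\<in>{n..<k}. z j\<bar> < e / 2" using small[of "e/2"] by auto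
    have split: "(\<Sum>j<k. z j) = (\<Sum>j<n. z j) + (\<Sum>j\<in>{n..<k}. z j)" if "k \<ge> n" for k
      using sum.atLeastLessThan_concat[of 0 n k z] that by (simp add: lessThan_atLeast0)
    show "\<exists>M. \<forall>m\<ge>M. \<forall>k\<ge>M. norm ((\<Sum>j<m. z j) - (\<Sum>j<k. z j)) < e"
    proof (intro exI allI impI)
      fix m k assume "n \<le> m" "n \<le> k"
      then have "norm ((\<Sum>j<m. z j) - (\<Sum>j<k. z j)) = \<bar>(\<Sum>j\<in>{n..<m}. z j) - (\<Sum>j\<in>{n..<k}. z j)\<bar>"
        using split[of m] split[of k] by simp
      also have "\<dots> \<le> \<bar>\<Sum>j\<in>{n..<m}. z j\<bar> + \<bar>\<Sum>j\<in>{n..<k}. z j\<bar>"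
        by (rule abs_triangle_ineq4)
      also have "\<dots> < e / 2 + e / 2" using n \<open>n \<le> m\<close> \<open>n \<le> k\<close> by (intro add_strict_mono) auto
      finally show "norm ((\<Sum>j<m. z j) - (\<Sum>j<k. z j)) < e" by simp
    qed
  qed
  then show ?thesis by (simp add: Cauchy_convergent_iff)
qed

lemma lim_eq_add_lim:
  fixes X Y d :: "nat \<Rightarrow> real"
  assumes X: "convergent X" and XY: "\<And>m. m \<ge> 1 \<Longrightarrow> X m = d m + Y m" and d: "d \<longlonglongrightarrow> d0"
  shows "lim X = d0 + lim Y"
proof -
  obtain l where l: "X \<longlonglongrightarrow> l" using X by (auto simp: convergent_def)
  have "(\<lambda>m. X m - d m) \<longlonglongrightarrow> l - d0" by (intro tendsto_diff l d)
  moreover have "eventually (\<lambda>m. X m - d m = Y m) sequentially"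
    using XY by (auto simp: eventually_sequentially intro!: exI[of _ 1])
  ultimately have "Y \<longlonglongrightarrow> l - d0" by (rule Lim_transform_eventually)
  then show ?thesis using l by (simp add: limI)
qed

lemma sum_remove2:
  assumes "finite S" "x \<in> S" "x \<noteq> y"
  shows "sum h S = h x + (if y \<in> S then h y else 0) + sum h (S - {x, y})"
proof -
  have "sum h S = h x + sum h (S - {x})" using assms by (simp add: sum.remove)
  moreover have "sum h (S - {x}) = (if y \<in> S then h y else 0) + sum h (S - {x, y})"
  proof (cases "y \<in> S")
    case True
    then have "sum h (S - {x}) = h y + sum h (S - {x} - {y})" using assms by (intro sum.remove) auto
    moreover have "S - {x} - {y} = S - {x, y}" by auto
    ultimately show ?thesis using True by simp
  next
    case False
    then have "S - {x} = S - {x, y}" by auto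
    then show ?thesis using False by simp
  qed
  ultimately show ?thesis by (simp add: add.assoc)
qed

definition first_passage :: "(nat \<Rightarrow> 'a \<Rightarrow> real) \<Rightarrow> real \<Rightarrow> nat \<Rightarrow> nat \<Rightarrow> 'a set" where
  "first_passage Z t n k =
     {\<omega>. t \<le> \<bar>\<Sum>j\<in>{n..<k}. Z j \<omega>\<bar> \<and> (\<forall>j\<in>{n..<k}. \<bar>\<Sum>i\<in>{n..<j}. Z i \<omega>\<bar> < t)}"

context prob_space begin

lemma first_passage_square_le:
  fixes Z :: "nat \<Rightarrow> 'a \<Rightarrow> real"
  assumes ind: "indep_vars (\<lambda>_. borel) Z UNIV"
    and int1: "\<And>j. integrable M (Z j)"
    and int2: "\<And>j. integrable M (\<lambda>\<omega>. (Z j \<omega>)^2)"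
    and mz: "\<And>j. expectation (Z j) = 0"
    and t: "t > 0" and k: "k \<in> {n..N}"
    and A_def: "A = first_passage Z t n k \<inter> space M"
  shows "t^2 * prob A \<le> expectation (\<lambda>\<omega>. (\<Sum>j\<in>{n..<N}. Z j \<omega>)^2 * indicator A \<omega>)"
proof -
  have [measurable]: "Z j \<in> borel_measurable M" for j
    using ind unfolding indep_vars_def by auto
  define S where "S \<omega> = (\<Sum>j\<in>{n..<k}. Z j \<omega>)" for \<omega>
  define T where "T \<omega> = (\<Sum>j\<in>{k..<N}. Z j \<omega>)" for \<omega>
  have A_eq: "A = {\<omega>\<in>space M. t \<le> \<bar>\<Sum>j\<in>{n..<k}. Z j \<omega>\<bar> \<and> (\<forall>j\<in>{n..<k}. \<bar>\<Sum>i\<in>{n..<j}. Z i \<omega>\<bar> < t)}"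
    unfolding A_def first_passage_def by auto
  have [measurable]: "A \<in> sets M" unfolding A_eq by measurable
  have SN: "(\<Sum>j\<in>{n..<N}. Z j \<omega>) = S \<omega> + T \<omega>" for \<omega>
    unfolding S_def T_def using k by (simp add: sum.atLeastLessThan_concat)
  \<comment> \<open>\<open>S \<cdot> 1\<^sub>A\<close> depends only on \<open>Z\<^sub>n, \<dots>, Z\<^sub>k\<^sub>-\<^sub>1\<close>, and \<open>T\<close> only on \<open>Z\<^sub>k, \<dots>, Z\<^sub>N\<^sub>-\<^sub>1\<close>\<close>
  define f where "f x = (\<Sum>j\<in>{n..<k}. x j) * indicator {x. t \<le> \<bar>\<Sum>j\<in>{n..<k}. x j\<bar> \<and>
      (\<forall>j\<in>{n..<k}. \<bar>\<Sum>i\<in>{n..<j}. x i\<bar> < t)} x" for x :: "nat \<Rightarrow> real"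
  have fm: "f \<in> borel_measurable (PiM {n..<k} (\<lambda>_. borel))"
    unfolding f_def by measurable
  have gm: "(\<lambda>x::nat\<Rightarrow>real. \<Sum>j\<in>{k..<N}. x j * 1) \<in> borel_measurable (PiM {k..<N} (\<lambda>_. borel))"
    by measurable
  have iv0: "indep_var borel (\<lambda>\<omega>. f (\<lambda>i\<in>{n..<k}. Z i \<omega>))
      borel (\<lambda>\<omega>. (\<lambda>x. \<Sum>j\<in>{k..<N}. x j * 1) (\<lambda>i\<in>{k..<N}. Z i \<omega>))"
    by (rule indep_var_restrict_compose[OF ind _ _ _ fm gm]) auto
  have feq: "f (\<lambda>i\<in>{n..<k}. Z i \<omega>) = S \<omega> * indicator A \<omega>" if "\<omega> \<in> space M" for \<omega>
  proof -
    have "(\<Sum>i\<in>{n..<j}. (\<lambda>i\<in>{n..<k}. Z i \<omega>) i) = (\<Sum>i\<in>{n..<j}. Z i \<omega>)" if "j \<le> k" for j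
      using that by (intro sum.cong) auto
    then show ?thesis unfolding f_def S_def using that by (simp add: A_eq indicator_def)
  qed
  have iv: "indep_var borel (\<lambda>\<omega>. S \<omega> * indicator A \<omega>) borel T"
    using iv0 unfolding T_def by (rule indep_var_cong) (auto simp: feq intro!: sum.cong)
  have "t^2 * prob A = expectation (\<lambda>\<omega>. t^2 * indicator A \<omega>)"
    by simp
  also have "\<dots> \<le> expectation (\<lambda>\<omega>. (S \<omega>)^2 * indicator A \<omega>)"
  proof (rule integral_mono)
    show "integrable M (\<lambda>\<omega>. t^2 * indicator A \<omega>)"
      using integrable_real_indicator[of A M] by (simp add: emeasure_eq_measure)
    show "integrable M (\<lambda>\<omega>. (S \<omega>)^2 * indicator A \<omega>)"
      unfolding S_def using expectation_square_sum_indep[OF ind, of "{n..<k}"] int1 int2 mz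
      by (intro integrable_real_mult_indicator) auto
    fix \<omega>
    have "t^2 \<le> (S \<omega>)^2" if "\<omega> \<in> A"
      using that t power_mono[of t "\<bar>S \<omega>\<bar>" 2] unfolding A_eq S_def by auto
    then show "t^2 * indicator A \<omega> \<le> (S \<omega>)^2 * indicator A \<omega>"
      by (simp add: indicator_def)
  qed
  also have "\<dots> \<le> expectation (\<lambda>\<omega>. (\<Sum>j\<in>{n..<N}. Z j \<omega>)^2 * indicator A \<omega>)"
    unfolding SN S_def T_def using int1 mz expectation_square_sum_indep[OF ind] int2
    by (intro expectation_square_indicator_le_add_indep[OF iv[unfolded S_def T_def]]) auto
  finally show ?thesis .
qed

lemma kolmogorov_maximal_inequality:
  fixes Z :: "nat \<Rightarrow> 'a \<Rightarrow> real"
  assumes ind: "indep_vars (\<lambda>_. borel) Z UNIV"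
    and int1: "\<And>j. integrable M (Z j)"
    and int2: "\<And>j. integrable M (\<lambda>\<omega>. (Z j \<omega>)^2)"
    and mz: "\<And>j. expectation (Z j) = 0"
    and t: "t > 0"
  shows "t^2 * prob {\<omega>\<in>space M. \<exists>k\<in>{n..N}. t \<le> \<bar>\<Sum>j\<in>{n..<k}. Z j \<omega>\<bar>}
           \<le> (\<Sum>j\<in>{n..<N}. expectation (\<lambda>\<omega>. (Z j \<omega>)^2))"
proof -
  have [measurable]: "Z j \<in> borel_measurable M" for j
    using ind unfolding indep_vars_def by auto
  define S where "S k \<omega> = (\<Sum>j\<in>{n..<k}. Z j \<omega>)" for k \<omega>
  have [measurable]: "S k \<in> borel_measurable M" for k unfolding S_def by measurable
  define A where "A k = first_passage Z t n k \<inter> space M" for k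
  have A_eq: "A k = {\<omega>\<in>space M. t \<le> \<bar>S k \<omega>\<bar> \<and> (\<forall>j\<in>{n..<k}. \<bar>S j \<omega>\<bar> < t)}" for k
    unfolding A_def first_passage_def S_def by auto
  have [measurable]: "A k \<in> sets M" for k unfolding A_eq by measurable
  have disj: "disjoint_family_on A {n..N}"
    unfolding disjoint_family_on_def A_eq
    by (auto, metis atLeastLessThan_iff linorder_neqE_nat not_le order_refl less_le_trans)
  have Un: "{\<omega>\<in>space M. \<exists>k\<in>{n..N}. t \<le> \<bar>S k \<omega>\<bar>} = (\<Union>k\<in>{n..N}. A k)"
  proof
    show "(\<Union>k\<in>{n..N}. A k) \<subseteq> {\<omega>\<in>space M. \<exists>k\<in>{n..N}. t \<le> \<bar>S k \<omega>\<bar>}"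
      unfolding A_eq by auto
    show "{\<omega>\<in>space M. \<exists>k\<in>{n..N}. t \<le> \<bar>S k \<omega>\<bar>} \<subseteq> (\<Union>k\<in>{n..N}. A k)"
    proof safe
      fix \<omega> k assume \<omega>: "\<omega> \<in> space M" and "k \<in> {n..N}" "t \<le> \<bar>S k \<omega>\<bar>"
      then obtain k0 where "k0 \<in> {n..N}" "t \<le> \<bar>S k0 \<omega>\<bar>" "\<forall>j\<in>{n..<k0}. \<not> t \<le> \<bar>S j \<omega>\<bar>"
        using first_index_in_interval[of k n N "\<lambda>k. t \<le> \<bar>S k \<omega>\<bar>"] by blast
      then show "\<omega> \<in> (\<Union>k\<in>{n..N}. A k)" using \<omega> unfolding A_eq by (auto simp: not_le)
    qed
  qed
  have iS2: "integrable M (\<lambda>\<omega>. (S k \<omega>)^2) \<and>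
      expectation (\<lambda>\<omega>. (S k \<omega>)^2) = (\<Sum>j\<in>{n..<k}. expectation (\<lambda>\<omega>. (Z j \<omega>)^2))" for k
    unfolding S_def by (rule expectation_square_sum_indep[OF ind]) (use int1 int2 mz in auto)
  have "t^2 * prob {\<omega>\<in>space M. \<exists>k\<in>{n..N}. t \<le> \<bar>S k \<omega>\<bar>} = (\<Sum>k\<in>{n..N}. t^2 * prob (A k))"
    unfolding Un by (subst finite_measure_finite_Union) (auto simp: disj sum_distrib_left)
  also have "\<dots> \<le> (\<Sum>k\<in>{n..N}. expectation (\<lambda>\<omega>. (S N \<omega>)^2 * indicator (A k) \<omega>))"
    unfolding S_def
    by (intro sum_mono first_passage_square_le[OF ind int1 int2 mz t]) (auto simp: A_def)
  also have "\<dots> = expectation (\<lambda>\<omega>. \<Sum>k\<in>{n..N}. (S N \<omega>)^2 * indicator (A k) \<omega>)"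
    by (rule Bochner_Integration.integral_sum[symmetric])
       (rule integrable_real_mult_indicator, auto simp: iS2)
  also have "\<dots> \<le> expectation (\<lambda>\<omega>. (S N \<omega>)^2)"
  proof (rule integral_mono)
    show "integrable M (\<lambda>\<omega>. \<Sum>k\<in>{n..N}. (S N \<omega>)^2 * indicator (A k) \<omega>)"
      by (intro Bochner_Integration.integrable_sum integrable_real_mult_indicator) (auto simp: iS2)
    show "integrable M (\<lambda>\<omega>. (S N \<omega>)^2)" using iS2 by auto
    fix \<omega>
    have "(\<Sum>k\<in>{n..N}. (S N \<omega>)^2 * indicator (A k) \<omega>) = (S N \<omega>)^2 * indicator (\<Union>k\<in>{n..N}. A k) \<omega>"
      by (simp add: indicator_UN_disjoint[OF _ disj] sum_distrib_left)
    also have "\<dots> \<le> (S N \<omega>)^2" by (simp add: indicator_def)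
    finally show "(\<Sum>k\<in>{n..N}. (S N \<omega>)^2 * indicator (A k) \<omega>) \<le> (S N \<omega>)^2" .
  qed
  also have "\<dots> = (\<Sum>j\<in>{n..<N}. expectation (\<lambda>\<omega>. (Z j \<omega>)^2))" using iS2 by auto
  finally show ?thesis unfolding S_def .
qed

lemma kolmogorov_maximal_inequality_tail:
  fixes Z :: "nat \<Rightarrow> 'a \<Rightarrow> real"
  assumes ind: "indep_vars (\<lambda>_. borel) Z UNIV"
    and int1: "\<And>j. integrable M (Z j)"
    and int2: "\<And>j. integrable M (\<lambda>\<omega>. (Z j \<omega>)^2)"
    and mz: "\<And>j. expectation (Z j) = 0"
    and sm: "summable (\<lambda>j. expectation (\<lambda>\<omega>. (Z j \<omega>)^2))"
    and t: "t > 0"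
  shows "t^2 * prob {\<omega>\<in>space M. \<exists>k\<ge>n. t \<le> \<bar>\<Sum>j\<in>{n..<k}. Z j \<omega>\<bar>}
           \<le> (\<Sum>j. expectation (\<lambda>\<omega>. (Z (j + n) \<omega>)^2))"
proof -
  have [measurable]: "Z j \<in> borel_measurable M" for j
    using ind unfolding indep_vars_def by auto
  define v where "v j = expectation (\<lambda>\<omega>. (Z j \<omega>)^2)" for j
  have v0: "0 \<le> v j" for j unfolding v_def by simp
  have tail: "(\<Sum>j\<in>{n..<N}. v j) \<le> (\<Sum>j. v (j + n))" for N
  proof -
    have "(\<Sum>j\<in>{n..<N}. v j) = (\<Sum>j\<in>{..<N-n}. v (j + n))"
    proof (cases "n \<le> N")
      case True
      then show ?thesis
        by (intro sum.reindex_bij_witness[of _ "\<lambda>j. j + n" "\<lambda>j. j - n"]) auto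
    qed simp
    also have "\<dots> \<le> (\<Sum>j. v (j + n))"
      by (rule sum_le_suminf) (use sm v0 in \<open>auto simp: summable_iff_shift v_def[symmetric]\<close>)
    finally show ?thesis .
  qed
  define F where "F N = {\<omega>\<in>space M. \<exists>k\<in>{n..N}. t \<le> \<bar>\<Sum>j\<in>{n..<k}. Z j \<omega>\<bar>}" for N
  have [measurable]: "F N \<in> sets M" for N unfolding F_def by measurable
  have "incseq F" unfolding incseq_def F_def by fastforce
  then have "(\<lambda>N. prob (F N)) \<longlonglongrightarrow> prob (\<Union>N. F N)"
    by (intro finite_Lim_measure_incseq) auto
  moreover have "prob (F N) \<le> (\<Sum>j. v (j + n)) / t^2" for N
  proof -
    have "t^2 * prob (F N) \<le> (\<Sum>j\<in>{n..<N}. v j)"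
      unfolding F_def v_def by (rule kolmogorov_maximal_inequality[OF ind int1 int2 mz t])
    then show ?thesis using tail[of N] t by (simp add: field_simps)
  qed
  ultimately have "prob (\<Union>N. F N) \<le> (\<Sum>j. v (j + n)) / t^2"
    by (intro LIMSEQ_le_const2) auto
  moreover have "(\<Union>N. F N) = {\<omega>\<in>space M. \<exists>k\<ge>n. t \<le> \<bar>\<Sum>j\<in>{n..<k}. Z j \<omega>\<bar>}"
    unfolding F_def by fastforce
  ultimately show ?thesis using t by (simp add: field_simps v_def)
qed

lemma kolmogorov_convergence:
  fixes Z :: "nat \<Rightarrow> 'a \<Rightarrow> real"
  assumes ind: "indep_vars (\<lambda>_. borel) Z UNIV"
    and int1: "\<And>j. integrable M (Z j)"
    and int2: "\<And>j. integrable M (\<lambda>\<omega>. (Z j \<omega>)^2)"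
    and mz: "\<And>j. expectation (Z j) = 0"
    and sm: "summable (\<lambda>j. expectation (\<lambda>\<omega>. (Z j \<omega>)^2))"
  shows "AE \<omega> in M. convergent (\<lambda>k. \<Sum>j<k. Z j \<omega>)"
proof -
  have [measurable]: "Z j \<in> borel_measurable M" for j
    using ind unfolding indep_vars_def by auto
  define R where "R n = (\<Sum>j. expectation (\<lambda>\<omega>. (Z (j + n) \<omega>)^2))" for n
  have "(\<lambda>n. suminf (\<lambda>j. expectation (\<lambda>\<omega>. (Z j \<omega>)^2)) - (\<Sum>j<n. expectation (\<lambda>\<omega>. (Z j \<omega>)^2)))
      \<longlonglongrightarrow> suminf (\<lambda>j. expectation (\<lambda>\<omega>. (Z j \<omega>)^2)) - suminf (\<lambda>j. expectation (\<lambda>\<omega>. (Z j \<omega>)^2))"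
    by (intro tendsto_diff tendsto_const summable_LIMSEQ sm)
  then have R0: "R \<longlonglongrightarrow> 0"
    unfolding R_def using suminf_minus_initial_segment[OF sm] by simp
  define B where "B t = {\<omega>\<in>space M. \<forall>n. \<exists>k\<ge>n. t \<le> \<bar>\<Sum>j\<in>{n..<k}. Z j \<omega>\<bar>}" for t :: real
  have [measurable]: "B t \<in> sets M" for t unfolding B_def by measurable
  have Bnull: "B t \<in> null_sets M" if t: "t > 0" for t
  proof -
    have "prob (B t) \<le> R n / t^2" for n
    proof -
      have "t^2 * prob (B t) \<le> t^2 * prob {\<omega>\<in>space M. \<exists>k\<ge>n. t \<le> \<bar>\<Sum>j\<in>{n..<k}. Z j \<omega>\<bar>}"
        unfolding B_def by (intro mult_left_mono finite_measure_mono) auto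
      also have "\<dots> \<le> R n"
        unfolding R_def by (rule kolmogorov_maximal_inequality_tail[OF ind int1 int2 mz sm t])
      finally show ?thesis using t by (simp add: field_simps)
    qed
    moreover have "(\<lambda>n. R n / t^2) \<longlonglongrightarrow> 0 / t^2" by (intro tendsto_divide R0 tendsto_const) (use t in auto)
    ultimately have "prob (B t) \<le> 0" by (intro LIMSEQ_le_const) auto
    then show ?thesis by (simp add: null_sets_def emeasure_eq_measure measure_le_0_iff)
  qed
  have "AE \<omega> in M. \<forall>r::nat. \<omega> \<notin> B (1 / (real r + 1))"
    unfolding AE_all_countable by (intro allI AE_I'[OF Bnull]) auto
  then show ?thesis
  proof (rule AE_mp[OF _ AE_I2], intro impI convergent_partial_sums_if_tails_small)
    fix \<omega> and e :: real assume \<omega>: "\<omega> \<in> space M" and nb: "\<forall>r::nat. \<omega> \<notin> B (1 / (real r + 1))"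
      and "0 < e"
    then obtain r :: nat where r: "1 / (real r + 1) < e"
      by (metis nat_approx_posE of_nat_Suc add.commute)
    have "\<omega> \<notin> B (1 / (real r + 1))" using nb by auto
    then obtain n where "\<forall>k\<ge>n. \<bar>\<Sum>j\<in>{n..<k}. Z j \<omega>\<bar> < 1 / (real r + 1)"
      using \<omega> unfolding B_def by (auto simp: not_le) (meson not_le)
    then show "\<exists>n. \<forall>k\<ge>n. \<bar>\<Sum>j\<in>{n..<k}. Z j \<omega>\<bar> < e" using r by (auto intro: less_trans)
  qed
qed

end

section \<open>Densities of sums with an independent summand\<close>

definition scaled_density :: "real \<Rightarrow> (real \<Rightarrow> real) \<Rightarrow> real \<Rightarrow> real" where
  "scaled_density c p y = p (y / c) / \<bar>c\<bar>"

lemma scaled_density_nonneg: "(\<And>x. 0 \<le> p x) \<Longrightarrow> 0 \<le> scaled_density c p y"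
  by (simp add: scaled_density_def)

lemma scaled_density_le: "(\<And>x. p x \<le> B) \<Longrightarrow> scaled_density c p y \<le> B / \<bar>c\<bar>"
  by (simp add: scaled_density_def divide_right_mono)

lemma measurable_scaled_density[measurable]:
  assumes [measurable]: "p \<in> borel_measurable borel"
  shows "scaled_density c p \<in> borel_measurable borel"
  unfolding scaled_density_def[abs_def] by measurable

lemma lipschitz_on_scaled_density:
  fixes p :: "real \<Rightarrow> real"
  assumes Lip: "lipschitz_on L UNIV p" and c: "c \<noteq> 0"
  shows "lipschitz_on (L / c^2) UNIV (scaled_density c p)"
  unfolding lipschitz_on_def
proof (intro conjI ballI)
  show "0 \<le> L / c^2" using Lip by (simp add: lipschitz_on_def)
  fix x y :: real
  have "\<bar>p (x / c) - p (y / c)\<bar> \<le> L * \<bar>x / c - y / c\<bar>"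
    using Lip by (simp add: lipschitz_on_def dist_real_def)
  also have "\<bar>x / c - y / c\<bar> = \<bar>x - y\<bar> / \<bar>c\<bar>"
    by (simp add: diff_divide_distrib[symmetric] abs_divide)
  finally have "\<bar>p (x / c) - p (y / c)\<bar> / \<bar>c\<bar> \<le> L * (\<bar>x - y\<bar> / \<bar>c\<bar>) / \<bar>c\<bar>"
    by (rule divide_right_mono) simp
  also have "\<dots> = L / c^2 * \<bar>x - y\<bar>"
    using c by (simp add: power2_eq_square abs_mult_self_eq field_simps)
  finally show "dist (scaled_density c p x) (scaled_density c p y) \<le> L / c^2 * dist x y"
    by (simp add: scaled_density_def dist_real_def diff_divide_distrib[symmetric] abs_divide)
qed

lemma nn_integral_density_affine:
  fixes p :: "real \<Rightarrow> real" and h :: "real \<Rightarrow> ennreal"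
  assumes [measurable]: "p \<in> borel_measurable borel" "h \<in> borel_measurable borel"
    and p0: "\<And>x. 0 \<le> p x" and c: "c \<noteq> 0"
  shows "(\<integral>\<^sup>+x. h (c * x + t) \<partial>density lborel (\<lambda>x. ennreal (p x)))
       = (\<integral>\<^sup>+y. ennreal (scaled_density c p (y - t)) * h y \<partial>lborel)"
proof -
  have "(\<integral>\<^sup>+y. ennreal (scaled_density c p (y - t)) * h y \<partial>lborel)
      = ennreal \<bar>c\<bar> * (\<integral>\<^sup>+x. ennreal (scaled_density c p (t + c * x - t)) * h (t + c * x) \<partial>lborel)"
    by (rule nn_integral_real_affine) (auto simp: c)
  also have "(\<lambda>x. ennreal (scaled_density c p (t + c * x - t)) * h (t + c * x))
      = (\<lambda>x. ennreal (1 / \<bar>c\<bar>) * (ennreal (p x) * h (c * x + t)))"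
  proof
    fix x
    have "ennreal (p x / \<bar>c\<bar>) = ennreal (1 / \<bar>c\<bar>) * ennreal (p x)"
      using p0[of x] by (subst ennreal_mult[symmetric]) auto
    then show "ennreal (scaled_density c p (t + c * x - t)) * h (t + c * x)
        = ennreal (1 / \<bar>c\<bar>) * (ennreal (p x) * h (c * x + t))"
      using c by (simp add: scaled_density_def add.commute mult.assoc)
  qed
  also have "(\<integral>\<^sup>+x. ennreal (1 / \<bar>c\<bar>) * (ennreal (p x) * h (c * x + t)) \<partial>lborel)
      = ennreal (1 / \<bar>c\<bar>) * (\<integral>\<^sup>+x. ennreal (p x) * h (c * x + t) \<partial>lborel)"
    by (rule nn_integral_cmult) auto
  also have "ennreal \<bar>c\<bar> * (ennreal (1 / \<bar>c\<bar>) * (\<integral>\<^sup>+x. ennreal (p x) * h (c * x + t) \<partial>lborel))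
      = (\<integral>\<^sup>+x. ennreal (p x) * h (c * x + t) \<partial>lborel)"
    using c by (simp add: mult.assoc[symmetric] ennreal_mult[symmetric])
  finally show ?thesis by (simp add: nn_integral_density)
qed

lemma lipschitz_density_bounded:
  fixes p :: "real \<Rightarrow> real"
  assumes D: "prob_space (density lborel (\<lambda>x. ennreal (p x)))" and p0: "\<And>x. 0 \<le> p x"
    and Lip: "lipschitz_on L UNIV p"
  shows "\<exists>B. \<forall>x. p x \<le> B"
proof -
  define L' where "L' = L + 1"
  have L'0: "0 < L'" unfolding L'_def using Lip by (simp add: lipschitz_on_def)
  have Lip': "\<bar>p x - p y\<bar> \<le> L' * \<bar>x - y\<bar>" for x y
  proof -
    have "\<bar>p x - p y\<bar> \<le> L * \<bar>x - y\<bar>" using Lip by (simp add: lipschitz_on_def dist_real_def)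
    also have "\<dots> \<le> L' * \<bar>x - y\<bar>" unfolding L'_def by (simp add: mult_right_mono)
    finally show ?thesis .
  qed
  have [measurable]: "p \<in> borel_measurable borel"
    using lipschitz_on_continuous_on[OF Lip] by (rule borel_measurable_continuous_onI)
  \<comment> \<open>\<open>p\<close> stays above \<open>p x\<^sub>0 / 2\<close> on an interval of length \<open>p x\<^sub>0 / L'\<close>, and has total mass 1\<close>
  have "p x0 \<le> 1 + 2 * L'" for x0
  proof -
    define c where "c = p x0"
    have c0: "0 \<le> c" unfolding c_def by (rule p0)
    define I where "I = {x0 - c / (2 * L') .. x0 + c / (2 * L')}"
    have lo: "c / 2 \<le> p y" if "y \<in> I" for y
    proof -
      have "\<bar>y - x0\<bar> \<le> c / (2 * L')" using that unfolding I_def by auto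
      then have "L' * \<bar>y - x0\<bar> \<le> L' * (c / (2 * L'))" using L'0 by (intro mult_left_mono) auto
      also have "\<dots> = c / 2" using L'0 by (simp add: field_simps)
      finally show ?thesis using Lip'[of x0 y] unfolding c_def by (simp add: abs_minus_commute)
    qed
    have "emeasure lborel I = ennreal (c / L')"
      unfolding I_def using c0 L'0 by (simp add: field_simps)
    then have "ennreal (c / 2 * (c / L')) = ennreal (c / 2) * emeasure lborel I"
      using c0 L'0 by (simp only:) (intro ennreal_mult, auto)
    also have "\<dots> = (\<integral>\<^sup>+x. ennreal (c / 2) * indicator I x \<partial>lborel)"
      by (rule nn_integral_cmult_indicator[symmetric]) (simp add: I_def)
    also have "\<dots> \<le> (\<integral>\<^sup>+x. ennreal (p x) * indicator I x \<partial>lborel)"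
      using lo by (intro nn_integral_mono) (auto intro: ennreal_leI split: split_indicator)
    also have "\<dots> = emeasure (density lborel (\<lambda>x. ennreal (p x))) I"
      by (rule emeasure_density[symmetric]) (auto simp: I_def)
    also have "\<dots> \<le> 1" by (rule prob_space.emeasure_le_1[OF D])
    finally have "c / 2 * (c / L') \<le> 1" by (simp only: ennreal_le_1)
    then have "c * c \<le> 2 * L'" using L'0 by (simp add: pos_divide_le_eq)
    moreover have "0 \<le> (c - 1/2) * (c - 1/2)" by simp
    ultimately show ?thesis unfolding c_def by (simp add: algebra_simps)
  qed
  then show ?thesis by blast
qed

lemma lipschitz_on_convolution:
  fixes f :: "real \<Rightarrow> real"
  assumes N: "prob_space N" "sets N = sets borel"
    and Lip: "lipschitz_on L UNIV f" and bounded: "\<And>x. \<bar>f x\<bar> \<le> C"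
  shows "lipschitz_on L UNIV (\<lambda>x. \<integral>w. f (x - w) \<partial>N)"
  unfolding lipschitz_on_def
proof (intro conjI ballI)
  interpret N: prob_space N by (rule N(1))
  have [measurable_cong]: "sets N = sets borel" by (rule N(2))
  have [measurable]: "f \<in> borel_measurable borel"
    using lipschitz_on_continuous_on[OF Lip] by (rule borel_measurable_continuous_onI)
  have intN: "integrable N (\<lambda>w. f (x - w))" for x
    by (rule N.integrable_const_bound[where B=C]) (use bounded in auto)
  show "0 \<le> L" using Lip by (simp add: lipschitz_on_def)
  fix x y :: real
  have "dist (\<integral>w. f (x - w) \<partial>N) (\<integral>w. f (y - w) \<partial>N) = norm (\<integral>w. f (x - w) - f (y - w) \<partial>N)"
    unfolding dist_real_def using intN by simp
  also have "\<dots> \<le> (\<integral>w. norm (f (x - w) - f (y - w)) \<partial>N)"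
    by (rule integral_norm_bound)
  also have "\<dots> \<le> (\<integral>w. L * dist x y \<partial>N)"
  proof (rule integral_mono)
    show "integrable N (\<lambda>w. norm (f (x - w) - f (y - w)))" using intN by auto
    fix w
    have "dist (f (x - w)) (f (y - w)) \<le> L * dist (x - w) (y - w)"
      using Lip by (simp add: lipschitz_on_def)
    then show "norm (f (x - w) - f (y - w)) \<le> L * dist x y"
      by (simp add: dist_real_def)
  qed simp
  also have "\<dots> = L * dist x y" by (simp add: N.prob_space)
  finally show "dist (\<integral>w. f (x - w) \<partial>N) (\<integral>w. f (y - w) \<partial>N) \<le> L * dist x y" .
qed

lemma nn_integral_pair_scaled_add:
  fixes p :: "real \<Rightarrow> real" and N :: "(real \<times> real) measure"
  assumes D: "prob_space D" and D_def: "D = density lborel (\<lambda>x. ennreal (p x))"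
    and [measurable]: "p \<in> borel_measurable borel" and p0: "\<And>x. 0 \<le> p x" and a0: "a0 \<noteq> 0"
    and N: "prob_space N" and [measurable_cong]: "sets N = sets (borel \<Otimes>\<^sub>M borel)"
    and [measurable]: "C \<in> sets (borel \<Otimes>\<^sub>M borel)"
    and \<phi>_def: "\<And>y z s. \<phi> y z s = scaled_density a0 p (z - snd s)
        * scaled_density a0 p (y - c * (z - snd s) / a0 - fst s)"
  shows "(\<integral>\<^sup>+t. indicator C (a0 * fst t + c * fst (snd t) + fst (snd (snd t)),
              a0 * fst (snd t) + snd (snd (snd t))) \<partial>(D \<Otimes>\<^sub>M (D \<Otimes>\<^sub>M N)))
       = (\<integral>\<^sup>+z. (\<integral>\<^sup>+s. ennreal (\<phi> (fst z) (snd z) s) \<partial>N) * indicator C z \<partial>(lborel \<Otimes>\<^sub>M lborel))"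
proof -
  interpret D: prob_space D by (rule D)
  interpret N: prob_space N by (rule N)
  have [measurable_cong]: "sets D = sets borel" unfolding D_def by simp
  interpret DN: pair_sigma_finite D N ..
  interpret DDN: pair_sigma_finite D "D \<Otimes>\<^sub>M N" ..
  interpret LLN: pair_sigma_finite "lborel \<Otimes>\<^sub>M lborel" N ..
  define f where "f = scaled_density a0 p"
  have [measurable]: "f \<in> borel_measurable borel" unfolding f_def by measurable
  have f0: "0 \<le> f y" for y unfolding f_def by (rule scaled_density_nonneg[OF p0])
  have [measurable]: "(\<lambda>(t, s). \<phi> (fst t) (snd t) s) \<in> borel_measurable ((borel \<Otimes>\<^sub>M borel) \<Otimes>\<^sub>M (borel \<Otimes>\<^sub>M borel))"
    unfolding \<phi>_def f_def[symmetric] by measurable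
  have [measurable]: "(\<lambda>s. \<phi> y z s) \<in> borel_measurable N" for y z
    unfolding \<phi>_def f_def[symmetric] by measurable
  have "(\<integral>\<^sup>+t. indicator C (a0 * fst t + c * fst (snd t) + fst (snd (snd t)),
          a0 * fst (snd t) + snd (snd (snd t))) \<partial>(D \<Otimes>\<^sub>M (D \<Otimes>\<^sub>M N)))
      = (\<integral>\<^sup>+r. \<integral>\<^sup>+x. indicator C (a0 * x + c * fst r + fst (snd r), a0 * fst r + snd (snd r)) \<partial>D \<partial>(D \<Otimes>\<^sub>M N))"
    by (subst DDN.nn_integral_snd[symmetric]) auto
  also have "\<dots> = (\<integral>\<^sup>+r. \<integral>\<^sup>+y. ennreal (f (y - (c * fst r + fst (snd r))))
      * indicator C (y, a0 * fst r + snd (snd r)) \<partial>lborel \<partial>(D \<Otimes>\<^sub>M N))"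
    unfolding D_def f_def
    by (intro nn_integral_cong, subst nn_integral_density_affine[symmetric]) (auto simp: p0 a0 add.assoc)
  also have "\<dots> = (\<integral>\<^sup>+s. \<integral>\<^sup>+w. \<integral>\<^sup>+y. ennreal (f (y - (c * w + fst s)))
      * indicator C (y, a0 * w + snd s) \<partial>lborel \<partial>D \<partial>N)"
    by (subst DN.nn_integral_snd[symmetric]) auto
  also have "\<dots> = (\<integral>\<^sup>+s. \<integral>\<^sup>+z. ennreal (f (z - snd s)) * (\<integral>\<^sup>+y. ennreal (f (y - c * (z - snd s) / a0 - fst s))
      * indicator C (y, z) \<partial>lborel) \<partial>lborel \<partial>N)"
  proof (rule nn_integral_cong)
    fix s :: "real \<times> real"
    have "(\<integral>\<^sup>+w. (\<lambda>z. \<integral>\<^sup>+y. ennreal (f (y - c * (z - snd s) / a0 - fst s)) * indicator C (y, z) \<partial>lborel)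
           (a0 * w + snd s) \<partial>D)
       = (\<integral>\<^sup>+z. ennreal (f (z - snd s)) * (\<integral>\<^sup>+y. ennreal (f (y - c * (z - snd s) / a0 - fst s))
           * indicator C (y, z) \<partial>lborel) \<partial>lborel)"
      unfolding D_def f_def by (rule nn_integral_density_affine) (auto simp: p0 a0)
    then show "(\<integral>\<^sup>+w. \<integral>\<^sup>+y. ennreal (f (y - (c * w + fst s))) * indicator C (y, a0 * w + snd s) \<partial>lborel \<partial>D)
       = (\<integral>\<^sup>+z. ennreal (f (z - snd s)) * (\<integral>\<^sup>+y. ennreal (f (y - c * (z - snd s) / a0 - fst s))
           * indicator C (y, z) \<partial>lborel) \<partial>lborel)"
      using a0 by (simp add: diff_diff_add)
  qed
  also have "\<dots> = (\<integral>\<^sup>+s. \<integral>\<^sup>+z. \<integral>\<^sup>+y. ennreal (\<phi> y z s) * indicator C (y, z) \<partial>lborel \<partial>lborel \<partial>N)"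
    by (intro nn_integral_cong, subst nn_integral_cmult[symmetric])
       (auto simp: \<phi>_def f_def[symmetric] ennreal_mult f0 mult.assoc)
  also have "\<dots> = (\<integral>\<^sup>+s. \<integral>\<^sup>+t. ennreal (\<phi> (fst t) (snd t) s) * indicator C t \<partial>(lborel \<Otimes>\<^sub>M lborel) \<partial>N)"
    by (intro nn_integral_cong, subst lborel_pair.nn_integral_snd[symmetric]) auto
  also have "\<dots> = (\<integral>\<^sup>+t. \<integral>\<^sup>+s. ennreal (\<phi> (fst t) (snd t) s) * indicator C t \<partial>N \<partial>(lborel \<Otimes>\<^sub>M lborel))"
    by (rule LLN.Fubini') auto
  also have "\<dots> = (\<integral>\<^sup>+t. (\<integral>\<^sup>+s. ennreal (\<phi> (fst t) (snd t) s) \<partial>N) * indicator C t \<partial>(lborel \<Otimes>\<^sub>M lborel))"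
    by (intro nn_integral_cong nn_integral_multc) auto
  finally show ?thesis .
qed

context prob_space begin

lemma distr_scaled_add_indep:
  fixes e W :: "'a \<Rightarrow> real" and pe :: "real \<Rightarrow> real"
  assumes e: "distributed M lborel e (\<lambda>x. ennreal (pe x))" and pe0: "\<And>x. 0 \<le> pe x"
    and [measurable]: "pe \<in> borel_measurable borel" and a0: "a0 \<noteq> 0"
    and iv: "indep_var borel e borel W"
  shows "distr M lborel (\<lambda>\<omega>. a0 * e \<omega> + W \<omega>)
    = density lborel (\<lambda>y. \<integral>\<^sup>+w. ennreal (scaled_density a0 pe (y - w)) \<partial>distr M borel W)"
proof (rule measure_eqI)
  have [measurable]: "e \<in> borel_measurable M" "W \<in> borel_measurable M"
    using indep_var_rv1[OF iv] indep_var_rv2[OF iv] by simp_all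
  define N where "N = distr M borel W"
  interpret N: prob_space N unfolding N_def by (rule prob_space_distr) simp
  have [measurable_cong]: "sets N = sets borel" unfolding N_def by simp
  have De: "distr M borel e = density lborel (\<lambda>x. ennreal (pe x))"
    using e by (simp add: distributed_def cong: distr_cong)
  interpret P: pair_sigma_finite "distr M borel e" N
    using prob_space_distr[of e borel]
    by (simp add: prob_space_imp_sigma_finite pair_sigma_finite_def N.sigma_finite_measure_axioms)
  interpret P2: pair_sigma_finite lborel N ..
  have joint: "distr M (borel \<Otimes>\<^sub>M borel) (\<lambda>\<omega>. (e \<omega>, W \<omega>)) = distr M borel e \<Otimes>\<^sub>M N"
    using iv unfolding indep_var_distribution_eq N_def by simp
  fix A assume "A \<in> sets (distr M lborel (\<lambda>\<omega>. a0 * e \<omega> + W \<omega>))"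
  then have [measurable]: "A \<in> sets borel" by simp
  have "emeasure (distr M lborel (\<lambda>\<omega>. a0 * e \<omega> + W \<omega>)) A
      = (\<integral>\<^sup>+z. indicator A (a0 * fst z + snd z) \<partial>distr M (borel \<Otimes>\<^sub>M borel) (\<lambda>\<omega>. (e \<omega>, W \<omega>)))"
    by (subst emeasure_distr, simp, simp, subst nn_integral_distr)
       (auto simp: nn_integral_indicator[symmetric] simp del: nn_integral_indicator
         intro!: nn_integral_cong split: split_indicator)
  also have "\<dots> = (\<integral>\<^sup>+w. \<integral>\<^sup>+x. indicator A (a0 * x + w) \<partial>distr M borel e \<partial>N)"
    unfolding joint by (subst P.nn_integral_snd[symmetric]) auto
  also have "\<dots> = (\<integral>\<^sup>+w. \<integral>\<^sup>+y. ennreal (scaled_density a0 pe (y - w)) * indicator A y \<partial>lborel \<partial>N)"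
    unfolding De by (intro nn_integral_cong nn_integral_density_affine) (auto simp: pe0 a0)
  also have "\<dots> = (\<integral>\<^sup>+y. \<integral>\<^sup>+w. ennreal (scaled_density a0 pe (y - w)) * indicator A y \<partial>N \<partial>lborel)"
    by (rule P2.Fubini') auto
  also have "\<dots> = emeasure (density lborel (\<lambda>y. \<integral>\<^sup>+w. ennreal (scaled_density a0 pe (y - w)) \<partial>N)) A"
    by (simp add: emeasure_density nn_integral_multc)
  finally show "emeasure (distr M lborel (\<lambda>\<omega>. a0 * e \<omega> + W \<omega>)) A
      = emeasure (density lborel (\<lambda>y. \<integral>\<^sup>+w. ennreal (scaled_density a0 pe (y - w)) \<partial>distr M borel W)) A"
    unfolding N_def .
qed simp

lemma distributed_scaled_add_indep:
  fixes e W :: "'a \<Rightarrow> real" and pe :: "real \<Rightarrow> real"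
  assumes e: "distributed M lborel e (\<lambda>x. ennreal (pe x))" and pe0: "\<And>x. 0 \<le> pe x"
    and peB: "\<And>x. pe x \<le> B" and Lip: "lipschitz_on L UNIV pe" and a0: "a0 \<noteq> 0"
    and iv: "indep_var borel e borel W"
  shows "\<exists>p. (\<forall>x. 0 \<le> p x) \<and> distributed M lborel (\<lambda>\<omega>. a0 * e \<omega> + W \<omega>) (\<lambda>x. ennreal (p x))
            \<and> lipschitz_on (L / a0^2) UNIV p \<and> (\<forall>x. p x \<le> B / \<bar>a0\<bar>)"
proof -
  have [measurable]: "e \<in> borel_measurable M" "W \<in> borel_measurable M"
    using indep_var_rv1[OF iv] indep_var_rv2[OF iv] by simp_all
  have pem[measurable]: "pe \<in> borel_measurable borel"
    using lipschitz_on_continuous_on[OF Lip] by (rule borel_measurable_continuous_onI)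
  define N where "N = distr M borel W"
  interpret N: prob_space N unfolding N_def by (rule prob_space_distr) simp
  have [measurable_cong]: "sets N = sets borel" unfolding N_def by simp
  define f where "f = scaled_density a0 pe"
  have f0: "0 \<le> f y" for y unfolding f_def by (rule scaled_density_nonneg[OF pe0])
  have fB: "f y \<le> B / \<bar>a0\<bar>" for y unfolding f_def by (rule scaled_density_le[OF peB])
  have [measurable]: "f \<in> borel_measurable borel" unfolding f_def by measurable
  define p where "p x = (\<integral>w. f (x - w) \<partial>N)" for x
  have intN: "integrable N (\<lambda>w. f (x - w))" for x
    by (rule N.integrable_const_bound[where B="B / \<bar>a0\<bar>"]) (use f0 fB in auto)
  have p_nn: "ennreal (p x) = (\<integral>\<^sup>+w. ennreal (f (x - w)) \<partial>N)" for x
    unfolding p_def by (rule nn_integral_eq_integral[symmetric]) (use intN f0 in auto)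
  have pL: "lipschitz_on (L / a0^2) UNIV p" unfolding p_def f_def
    by (rule lipschitz_on_convolution[OF N.prob_space_axioms _ lipschitz_on_scaled_density[OF Lip a0],
          where C="B / \<bar>a0\<bar>"]) (use f0 fB in \<open>auto simp: f_def N_def\<close>)
  have [measurable]: "p \<in> borel_measurable borel"
    using lipschitz_on_continuous_on[OF pL] by (rule borel_measurable_continuous_onI)
  have p0: "0 \<le> p x" for x unfolding p_def using f0 by simp
  have pB: "p x \<le> B / \<bar>a0\<bar>" for x
    using integral_mono[OF intN _ fB, of x] unfolding p_def by (simp add: N.prob_space)
  have "distr M lborel (\<lambda>\<omega>. a0 * e \<omega> + W \<omega>) = density lborel (\<lambda>x. ennreal (p x))"
    unfolding p_nn f_def N_def by (rule distr_scaled_add_indep[OF e pe0 pem a0 iv])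
  then show ?thesis
    by (intro exI[of _ p] conjI allI p0 pL pB) (simp add: distributed_def)
qed

lemma distributed_real_density_if_bounded:
  assumes distr: "distr M N X = density N Q" and [measurable]: "Q \<in> borel_measurable N"
    and X: "X \<in> measurable M N" and bound: "\<And>z. Q z \<le> ennreal C" and C: "0 \<le> C"
  shows "\<exists>q. (\<forall>z. 0 \<le> q z) \<and> distributed M N X (\<lambda>z. ennreal (q z)) \<and> (\<forall>z. q z \<le> C)"
proof (intro exI conjI allI)
  have "Q z = ennreal (enn2real (Q z))" for z
    using bound[of z] by (intro ennreal_enn2real[symmetric]) (auto simp: top_unique dest: le_less_trans[OF _ ennreal_less_top])
  then have "(\<lambda>z. ennreal (enn2real (Q z))) = Q" by simp
  then show "distributed M N X (\<lambda>z. ennreal (enn2real (Q z)))"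
    using distr X by (simp add: distributed_def)
  show "enn2real (Q z) \<le> C" for z
    using bound[of z] \<open>Q z = ennreal (enn2real (Q z))\<close> C by (metis ennreal_le_iff)
qed simp

lemma distributed_pair_scaled_add_indep:
  fixes e1 e2 U V :: "'a \<Rightarrow> real" and pe :: "real \<Rightarrow> real"
  assumes e1: "distributed M lborel e1 (\<lambda>x. ennreal (pe x))"
    and e2: "distributed M lborel e2 (\<lambda>x. ennreal (pe x))"
    and pe0: "\<And>x. 0 \<le> pe x" and peB: "\<And>x. pe x \<le> B"
    and [measurable]: "pe \<in> borel_measurable borel" and a0: "a0 \<noteq> 0"
    and [measurable]: "U \<in> borel_measurable M" "V \<in> borel_measurable M"
    and iv1: "distr M (borel \<Otimes>\<^sub>M (borel \<Otimes>\<^sub>M (borel \<Otimes>\<^sub>M borel))) (\<lambda>\<omega>. (e1 \<omega>, e2 \<omega>, U \<omega>, V \<omega>))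
       = distr M borel e1 \<Otimes>\<^sub>M distr M (borel \<Otimes>\<^sub>M (borel \<Otimes>\<^sub>M borel)) (\<lambda>\<omega>. (e2 \<omega>, U \<omega>, V \<omega>))"
    and iv2: "distr M (borel \<Otimes>\<^sub>M (borel \<Otimes>\<^sub>M borel)) (\<lambda>\<omega>. (e2 \<omega>, U \<omega>, V \<omega>))
       = distr M borel e2 \<Otimes>\<^sub>M distr M (borel \<Otimes>\<^sub>M borel) (\<lambda>\<omega>. (U \<omega>, V \<omega>))"
  shows "\<exists>q. (\<forall>z. 0 \<le> q z) \<and>
     distributed M (lborel \<Otimes>\<^sub>M lborel) (\<lambda>\<omega>. (a0 * e1 \<omega> + c * e2 \<omega> + U \<omega>, a0 * e2 \<omega> + V \<omega>)) (\<lambda>z. ennreal (q z))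
     \<and> (\<forall>z. q z \<le> (B / \<bar>a0\<bar>)^2)"
proof -
  have [measurable]: "e1 \<in> borel_measurable M" "e2 \<in> borel_measurable M"
    using e1 e2 by (simp_all add: distributed_def)
  define N where "N = distr M (borel \<Otimes>\<^sub>M borel) (\<lambda>\<omega>. (U \<omega>, V \<omega>))"
  interpret N: prob_space N unfolding N_def by (rule prob_space_distr) simp
  have sets_N[measurable_cong]: "sets N = sets (borel \<Otimes>\<^sub>M borel)" unfolding N_def by simp
  define D where "D = density lborel (\<lambda>x. ennreal (pe x))"
  have D1: "distr M borel e1 = D" and D2: "distr M borel e2 = D"
    using e1 e2 by (simp_all add: distributed_def D_def cong: distr_cong)
  have D: "prob_space D" unfolding D1[symmetric] by (rule prob_space_distr) simp
  have joint: "distr M (borel \<Otimes>\<^sub>M (borel \<Otimes>\<^sub>M (borel \<Otimes>\<^sub>M borel))) (\<lambda>\<omega>. (e1 \<omega>, e2 \<omega>, U \<omega>, V \<omega>))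
      = D \<Otimes>\<^sub>M (D \<Otimes>\<^sub>M N)"
    using iv1 iv2 unfolding D1 D2 N_def by simp
  define f where "f = scaled_density a0 pe"
  define \<phi> where "\<phi> y z s = f (z - snd s) * f (y - c * (z - snd s) / a0 - fst s)" for y z and s :: "real \<times> real"
  have \<phi>B: "\<phi> y z s \<le> (B / \<bar>a0\<bar>)^2" for y z s
    unfolding \<phi>_def power2_eq_square f_def
    by (intro mult_mono scaled_density_le scaled_density_nonneg) (auto intro: order_trans[OF pe0 peB] pe0 peB)
  define Q where "Q t = (\<integral>\<^sup>+s. ennreal (\<phi> (fst t) (snd t) s) \<partial>N)" for t
  have [measurable]: "Q \<in> borel_measurable (lborel \<Otimes>\<^sub>M lborel)"
    unfolding Q_def \<phi>_def f_def by measurable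
  have "Q t \<le> ennreal ((B / \<bar>a0\<bar>)^2)" for t
    using nn_integral_mono[of N "\<lambda>s. ennreal (\<phi> (fst t) (snd t) s)" "\<lambda>_. ennreal ((B / \<bar>a0\<bar>)^2)"] \<phi>B
    by (simp add: Q_def N.emeasure_space_1)
  moreover have "distr M (lborel \<Otimes>\<^sub>M lborel) (\<lambda>\<omega>. (a0 * e1 \<omega> + c * e2 \<omega> + U \<omega>, a0 * e2 \<omega> + V \<omega>))
      = density (lborel \<Otimes>\<^sub>M lborel) Q"
  proof (rule measure_eqI)
    fix C assume "C \<in> sets (distr M (lborel \<Otimes>\<^sub>M lborel) (\<lambda>\<omega>. (a0 * e1 \<omega> + c * e2 \<omega> + U \<omega>, a0 * e2 \<omega> + V \<omega>)))"
    then have [measurable]: "C \<in> sets (borel \<Otimes>\<^sub>M borel)" by simp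
    have "emeasure (distr M (lborel \<Otimes>\<^sub>M lborel) (\<lambda>\<omega>. (a0 * e1 \<omega> + c * e2 \<omega> + U \<omega>, a0 * e2 \<omega> + V \<omega>))) C
        = (\<integral>\<^sup>+t. indicator C (a0 * fst t + c * fst (snd t) + fst (snd (snd t)), a0 * fst (snd t) + snd (snd (snd t)))
          \<partial>distr M (borel \<Otimes>\<^sub>M (borel \<Otimes>\<^sub>M (borel \<Otimes>\<^sub>M borel))) (\<lambda>\<omega>. (e1 \<omega>, e2 \<omega>, U \<omega>, V \<omega>)))"
      by (subst emeasure_distr, simp, simp, subst nn_integral_distr)
         (auto simp: nn_integral_indicator[symmetric] simp del: nn_integral_indicator
           intro!: nn_integral_cong split: split_indicator)
    also have "\<dots> = (\<integral>\<^sup>+t. Q t * indicator C t \<partial>(lborel \<Otimes>\<^sub>M lborel))"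
      unfolding joint Q_def
      by (rule nn_integral_pair_scaled_add[OF D D_def _ pe0 a0 N.prob_space_axioms sets_N])
         (auto simp: \<phi>_def f_def)
    finally show "emeasure (distr M (lborel \<Otimes>\<^sub>M lborel) (\<lambda>\<omega>. (a0 * e1 \<omega> + c * e2 \<omega> + U \<omega>, a0 * e2 \<omega> + V \<omega>))) C
        = emeasure (density (lborel \<Otimes>\<^sub>M lborel) Q) C"
      by (simp add: emeasure_density)
  qed simp
  moreover have "(\<lambda>\<omega>. (a0 * e1 \<omega> + c * e2 \<omega> + U \<omega>, a0 * e2 \<omega> + V \<omega>)) \<in> measurable M (lborel \<Otimes>\<^sub>M lborel)"
    by measurable
  ultimately show ?thesis
    by (intro distributed_real_density_if_bounded[where Q=Q]) auto
qed

end

section \<open>Index cubes\<close>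

lemma finite_cube: "finite (cube m :: (int ^ 'd::finite) set)"
proof -
  have "(cube m :: (int ^ 'd) set) \<subseteq> vec_lambda ` (PiE UNIV (\<lambda>_. {0..int m - 1}))"
  proof
    fix k :: "int ^ 'd" assume "k \<in> cube m"
    then have "(\<lambda>\<tau>. k $ \<tau>) \<in> PiE UNIV (\<lambda>_. {0..int m - 1})" unfolding cube_def by auto
    then show "k \<in> vec_lambda ` (PiE UNIV (\<lambda>_. {0..int m - 1}))"
      by (intro image_eqI[of k vec_lambda "vec_nth k"]) auto
  qed
  moreover have "finite (vec_lambda ` (PiE UNIV (\<lambda>_. {0..int m - 1})) :: (int ^ 'd) set)"
    by (intro finite_imageI finite_PiE) auto
  ultimately show ?thesis by (rule finite_subset)
qed

lemma cube_mono: "m \<le> n \<Longrightarrow> cube m \<subseteq> cube n"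
  unfolding cube_def by (auto intro: less_le_trans dest: of_nat_mono[where 'a=int])

lemma cube_0: "cube 0 = {}"
  unfolding cube_def by auto

lemma zero_in_cube: "m \<ge> 1 \<Longrightarrow> 0 \<in> cube m"
  unfolding cube_def by auto

lemma vge_zero_if_in_cube: "k \<in> cube m \<Longrightarrow> vge k 0"
  unfolding cube_def vge_def by auto

lemma vge_zero_antisym: "vge k 0 \<Longrightarrow> vge (-k) 0 \<Longrightarrow> k = 0"
  unfolding vge_def by (auto simp: vec_eq_iff intro: antisym)

lemma eventually_in_cube:
  fixes k :: "int ^ 'd::finite"
  assumes "vge k 0"
  shows "eventually (\<lambda>m. k \<in> cube m) sequentially"
proof -
  define s where "s = (\<Sum>\<tau>\<in>UNIV. k $ \<tau>)"
  have "k $ \<tau> \<le> s" for \<tau>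
    using assms unfolding vge_def s_def by (intro member_le_sum) auto
  moreover have "s \<le> int m - 1" if "m \<ge> nat s + 1" for m
  proof -
    have "s \<le> int (nat s)" by simp
    moreover have "int (nat s) + 1 \<le> int m" using that by linarith
    ultimately show ?thesis by linarith
  qed
  ultimately have "k $ \<tau> \<le> int m - 1" if "m \<ge> nat s + 1" for m \<tau>
    using that by (meson order_trans)
  then have "k \<in> cube m" if "m \<ge> nat s + 1" for m
    using assms that unfolding vge_def cube_def by simp
  then show ?thesis unfolding eventually_sequentially by blast
qed

lemma tendsto_if_in_cube:
  fixes k :: "int ^ 'd::finite"
  shows "(\<lambda>m. if k \<in> cube m then x else (0::real)) \<longlonglongrightarrow> (if vge k 0 then x else 0)"
proof (cases "vge k 0")
  case True
  then have "eventually (\<lambda>m. (if k \<in> cube m then x else 0) = x) sequentially"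
    by (rule eventually_mono[OF eventually_in_cube]) simp
  then show ?thesis using True by (simp add: tendsto_eventually)
next
  case False
  then have "(\<lambda>m. if k \<in> cube m then x else 0) = (\<lambda>m. 0)" using vge_zero_if_in_cube by fastforce
  then show ?thesis using False by simp
qed

definition cube_shell :: "nat \<Rightarrow> (int ^ 'd::finite) set" where
  "cube_shell n = cube (Suc n) - cube n"

lemma disjoint_family_cube_shell: "disjoint_family cube_shell"
proof -
  have "cube_shell n \<inter> cube_shell n' = {}" if "n < n'" for n n'
  proof -
    have "cube_shell n \<subseteq> cube n'" unfolding cube_shell_def using cube_mono[of "Suc n" n'] that by auto
    then show ?thesis unfolding cube_shell_def by auto
  qed
  then show ?thesis unfolding disjoint_family_on_def
    by (metis Int_commute linorder_neqE_nat)
qed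

lemma sum_cube_shell: "(\<Sum>n<m. \<Sum>k\<in>cube_shell n. h k) = (\<Sum>k\<in>cube m. h k)"
proof (induction m)
  case 0
  then show ?case by (simp add: cube_0)
next
  case (Suc m)
  have "(\<Sum>k\<in>cube (Suc m). h k) = (\<Sum>k\<in>cube m. h k) + (\<Sum>k\<in>cube_shell m. h k)"
    using sum.subset_diff[of "cube m" "cube (Suc m)" h] cube_mono[of m "Suc m"] finite_cube[of "Suc m"]
    by (simp add: cube_shell_def add.commute)
  then show ?case using Suc by simp
qed

section \<open>The linear random field\<close>

locale linear_field = prob_space M for M :: "'a measure" +
  fixes \<epsilon> :: "int ^ 'd::finite \<Rightarrow> 'a \<Rightarrow> real" and a :: "int ^ 'd \<Rightarrow> real"
    and pe :: "real \<Rightarrow> real" and L B :: real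
  assumes measurable_eps[measurable]: "\<And>i. \<epsilon> i \<in> borel_measurable M"
    and indep_eps: "indep_vars (\<lambda>_. borel) \<epsilon> UNIV"
    and distr_eps: "\<And>i. distr M borel (\<epsilon> i) = distr M borel (\<epsilon> 0)"
    and integrable_eps0: "integrable M (\<epsilon> 0)" and expectation_eps0: "expectation (\<epsilon> 0) = 0"
    and integrable_square_eps0: "integrable M (\<lambda>\<omega>. (\<epsilon> 0 \<omega>)^2)"
    and summable_square_a: "(\<lambda>k. (a k)^2) summable_on {k. vge k 0}"
    and a0: "a 0 \<noteq> 0"
    and pe_nonneg: "\<And>x. 0 \<le> pe x"
    and distributed_eps0: "distributed M lborel (\<epsilon> 0) (\<lambda>x. ennreal (pe x))"
    and lipschitz_pe: "lipschitz_on L UNIV pe"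
    and pe_le: "\<And>x. pe x \<le> B"
begin

lemma distributed_eps: "distributed M lborel (\<epsilon> j) (\<lambda>x. ennreal (pe x))"
  using distributed_eps0 distr_eps[of j] by (simp add: distributed_def cong: distr_cong)

lemma eps_comp:
  fixes g :: "real \<Rightarrow> real"
  assumes [measurable]: "g \<in> borel_measurable borel"
  shows "integrable M (\<lambda>\<omega>. g (\<epsilon> j \<omega>)) = integrable M (\<lambda>\<omega>. g (\<epsilon> 0 \<omega>))"
    and "expectation (\<lambda>\<omega>. g (\<epsilon> j \<omega>)) = expectation (\<lambda>\<omega>. g (\<epsilon> 0 \<omega>))"
  using integrable_distr_eq[of "\<epsilon> j" M borel g] integrable_distr_eq[of "\<epsilon> 0" M borel g]
    integral_distr[of "\<epsilon> j" M borel g] integral_distr[of "\<epsilon> 0" M borel g] distr_eps[of j]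
  by simp_all

lemma integrable_eps: "integrable M (\<epsilon> j)"
  using eps_comp(1)[of "\<lambda>x. x" j] integrable_eps0 by simp

lemma expectation_eps: "expectation (\<epsilon> j) = 0"
  using eps_comp(2)[of "\<lambda>x. x" j] expectation_eps0 by simp

lemma integrable_square_eps: "integrable M (\<lambda>\<omega>. (\<epsilon> j \<omega>)^2)"
  using eps_comp(1)[of "\<lambda>x. x^2" j] integrable_square_eps0 by simp

lemma expectation_square_eps: "expectation (\<lambda>\<omega>. (\<epsilon> j \<omega>)^2) = expectation (\<lambda>\<omega>. (\<epsilon> 0 \<omega>)^2)"
  using eps_comp(2)[of "\<lambda>x. x^2" j] by simp

lemma expectation_square_linear_sum:
  assumes F: "finite F"
  shows "integrable M (\<lambda>\<omega>. (\<Sum>k\<in>F. c k * \<epsilon> (i - k) \<omega>)^2)"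
    and "expectation (\<lambda>\<omega>. (\<Sum>k\<in>F. c k * \<epsilon> (i - k) \<omega>)^2)
           = (\<Sum>k\<in>F. (c k)^2) * expectation (\<lambda>\<omega>. (\<epsilon> 0 \<omega>)^2)"
proof -
  have "indep_vars (\<lambda>_. borel) (\<lambda>k \<omega>. c k * \<epsilon> (i - k) \<omega>) UNIV"
  proof (rule indep_vars_restrict_compose[OF indep_eps, where K="\<lambda>k. {i - k}" and g="\<lambda>k x. c k * x (i - k)"])
    show "disjoint_family (\<lambda>k. {i - k})" by (auto simp: disjoint_family_on_def)
    show "(\<lambda>x. c k * x (i - k)) \<in> borel_measurable (PiM {i - k} (\<lambda>_. borel))" for k
      by (intro borel_measurable_times borel_measurable_const measurable_component_singleton) auto
  qed simp
  then have "integrable M (\<lambda>\<omega>. (\<Sum>k\<in>F. c k * \<epsilon> (i - k) \<omega>)^2) \<and>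
      expectation (\<lambda>\<omega>. (\<Sum>k\<in>F. c k * \<epsilon> (i - k) \<omega>)^2)
        = (\<Sum>k\<in>F. expectation (\<lambda>\<omega>. (c k * \<epsilon> (i - k) \<omega>)^2))"
    by (rule expectation_square_sum_indep[OF _ F])
       (auto simp: integrable_eps expectation_eps integrable_square_eps power_mult_distrib)
  moreover have "expectation (\<lambda>\<omega>. (c k * \<epsilon> (i - k) \<omega>)^2) = (c k)^2 * expectation (\<lambda>\<omega>. (\<epsilon> 0 \<omega>)^2)" for k
    by (simp add: power_mult_distrib expectation_square_eps[of "i - k"])
  ultimately show "integrable M (\<lambda>\<omega>. (\<Sum>k\<in>F. c k * \<epsilon> (i - k) \<omega>)^2)"
    "expectation (\<lambda>\<omega>. (\<Sum>k\<in>F. c k * \<epsilon> (i - k) \<omega>)^2) = (\<Sum>k\<in>F. (c k)^2) * expectation (\<lambda>\<omega>. (\<epsilon> 0 \<omega>)^2)"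
    by (auto simp: sum_distrib_right)
qed

lemma measurable_Xtr[measurable]: "Xtr a \<epsilon> i m \<in> borel_measurable M"
  unfolding Xtr_def[abs_def] by measurable

lemma measurable_Xlin[measurable]: "Xlin a \<epsilon> i \<in> borel_measurable M"
  unfolding Xlin_def[abs_def] by measurable

\<comment> \<open>Group the cube sum into independent shells and apply Kolmogorov's convergence theorem.\<close>
lemma AE_convergent_Xtr: "AE \<omega> in M. convergent (\<lambda>m. Xtr a \<epsilon> i m \<omega>)"
proof -
  define Z where "Z n \<omega> = (\<Sum>k\<in>cube_shell n. a k * \<epsilon> (i - k) \<omega>)" for n \<omega>
  have fin: "finite (cube_shell n)" for n unfolding cube_shell_def by (simp add: finite_cube)
  have indZ: "indep_vars (\<lambda>_. borel) Z UNIV"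
  proof (rule indep_vars_restrict_compose[OF indep_eps,
        where K="\<lambda>n. (\<lambda>k. i - k) ` cube_shell n" and g="\<lambda>n x. \<Sum>k\<in>cube_shell n. a k * x (i - k)"])
    show "disjoint_family (\<lambda>n. (\<lambda>k. i - k) ` cube_shell n)"
      using disjoint_family_cube_shell unfolding disjoint_family_on_def by (auto, blast)
    show "Z n \<omega> = (\<Sum>k\<in>cube_shell n. a k * (\<lambda>j\<in>(\<lambda>k. i - k) ` cube_shell n. \<epsilon> j \<omega>) (i - k))" for n \<omega>
      unfolding Z_def by (intro sum.cong) auto
  qed measurable
  have sm: "summable (\<lambda>n. expectation (\<lambda>\<omega>. (Z n \<omega>)^2))"
  proof (rule summableI_nonneg_bounded)
    fix m
    have "(\<Sum>n<m. expectation (\<lambda>\<omega>. (Z n \<omega>)^2)) = (\<Sum>k\<in>cube m. (a k)^2) * expectation (\<lambda>\<omega>. (\<epsilon> 0 \<omega>)^2)"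
      unfolding Z_def expectation_square_linear_sum(2)[OF fin]
      by (simp add: sum_cube_shell sum_distrib_right[symmetric])
    also have "\<dots> \<le> infsum (\<lambda>k. (a k)^2) {k. vge k 0} * expectation (\<lambda>\<omega>. (\<epsilon> 0 \<omega>)^2)"
      by (intro mult_right_mono finite_sum_le_infsum summable_square_a finite_cube)
         (auto simp: vge_zero_if_in_cube)
    finally show "(\<Sum>n<m. expectation (\<lambda>\<omega>. (Z n \<omega>)^2))
        \<le> infsum (\<lambda>k. (a k)^2) {k. vge k 0} * expectation (\<lambda>\<omega>. (\<epsilon> 0 \<omega>)^2)" .
  qed simp
  have "AE \<omega> in M. convergent (\<lambda>m. \<Sum>n<m. Z n \<omega>)"
    using expectation_square_linear_sum(1)[OF fin]
    by (intro kolmogorov_convergence[OF indZ _ _ _ sm]) (auto simp: Z_def integrable_eps expectation_eps)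
  moreover have "(\<Sum>n<m. Z n \<omega>) = Xtr a \<epsilon> i m \<omega>" for m \<omega>
    unfolding Z_def Xtr_def by (rule sum_cube_shell)
  ultimately show ?thesis by simp
qed

lemma AE_Xlin_eq_lim:
  assumes "\<And>m \<omega>. m \<ge> 1 \<Longrightarrow> Xtr a \<epsilon> i m \<omega> = d m \<omega> + G m \<omega>"
    and "\<And>\<omega>. (\<lambda>m. d m \<omega>) \<longlonglongrightarrow> d0 \<omega>"
  shows "AE \<omega> in M. Xlin a \<epsilon> i \<omega> = d0 \<omega> + lim (\<lambda>m. G m \<omega>)"
  using AE_convergent_Xtr[of i]
  by (rule AE_mp, intro AE_I2 impI) (unfold Xlin_def, rule lim_eq_add_lim, use assms in auto)

definition bounded_lipschitz_density :: "('a \<Rightarrow> real) \<Rightarrow> (real \<Rightarrow> real) \<Rightarrow> bool" where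
  "bounded_lipschitz_density X p \<longleftrightarrow> (\<forall>x. 0 \<le> p x) \<and> distributed M lborel X (\<lambda>x. ennreal (p x))
     \<and> lipschitz_on (L / (a 0)^2) UNIV p \<and> (\<forall>x. p x \<le> B / \<bar>a 0\<bar>)"

definition bounded_pair_density :: "('a \<Rightarrow> real) \<Rightarrow> ('a \<Rightarrow> real) \<Rightarrow> (real \<times> real \<Rightarrow> real) \<Rightarrow> bool" where
  "bounded_pair_density X Y q \<longleftrightarrow> (\<forall>z. 0 \<le> q z)
     \<and> distributed M (lborel \<Otimes>\<^sub>M lborel) (\<lambda>\<omega>. (X \<omega>, Y \<omega>)) (\<lambda>z. ennreal (q z))
     \<and> (\<forall>z. q z \<le> (B / \<bar>a 0\<bar>)^2)"

lemma density_of_eps0_decomposition: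
  fixes g :: "(int ^ 'd \<Rightarrow> real) \<Rightarrow> real" and X :: "'a \<Rightarrow> real"
  assumes [measurable]: "g \<in> borel_measurable (PiM (- {0}) (\<lambda>_. borel))" "X \<in> borel_measurable M"
    and X: "AE \<omega> in M. X \<omega> = a 0 * \<epsilon> 0 \<omega> + g (\<lambda>j\<in>- {0}. \<epsilon> j \<omega>)"
  shows "\<exists>p. bounded_lipschitz_density X p"
proof -
  have "indep_var borel (\<lambda>\<omega>. (\<lambda>x. x 0) (\<lambda>j\<in>{0}. \<epsilon> j \<omega>)) borel (\<lambda>\<omega>. g (\<lambda>j\<in>- {0}. \<epsilon> j \<omega>))"
    by (rule indep_var_restrict_compose[OF indep_eps]) (auto intro: measurable_component_singleton)
  then have "indep_var borel (\<epsilon> 0) borel (\<lambda>\<omega>. g (\<lambda>j\<in>- {0}. \<epsilon> j \<omega>))"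
    by (rule indep_var_cong) auto
  then obtain p where p: "\<forall>x. 0 \<le> p x" "lipschitz_on (L / (a 0)^2) UNIV p" "\<forall>x. p x \<le> B / \<bar>a 0\<bar>"
    "distributed M lborel (\<lambda>\<omega>. a 0 * \<epsilon> 0 \<omega> + g (\<lambda>j\<in>- {0}. \<epsilon> j \<omega>)) (\<lambda>x. ennreal (p x))"
    using distributed_scaled_add_indep[OF distributed_eps pe_nonneg pe_le lipschitz_pe a0] by blast
  moreover have "distributed M lborel X (\<lambda>x. ennreal (p x))"
    by (rule distributed_AE_cong[OF p(4)]) (use X in auto)
  ultimately show ?thesis unfolding bounded_lipschitz_density_def by blast
qed

lemma measurable_sum_shifted_coords:
  assumes "\<And>k. k \<in> K \<Longrightarrow> i - k \<in> J"
  shows "(\<lambda>x. \<Sum>k\<in>K. a k * x (i - k)) \<in> borel_measurable (PiM J (\<lambda>_. borel))"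
  using assms
  by (intro borel_measurable_sum borel_measurable_times borel_measurable_const measurable_component_singleton)

lemma Xtr_zero_eq: "m \<ge> 1 \<Longrightarrow> Xtr a \<epsilon> 0 m \<omega> = a 0 * \<epsilon> 0 \<omega> + (\<Sum>k\<in>cube m - {0}. a k * \<epsilon> (0 - k) \<omega>)"
  unfolding Xtr_def by (subst sum.remove[OF finite_cube zero_in_cube]) auto

lemma Xtr_zero_density:
  assumes "m \<ge> 1"
  shows "\<exists>p. bounded_lipschitz_density (Xtr a \<epsilon> 0 m) p"
  by (rule density_of_eps0_decomposition[where g="\<lambda>x. \<Sum>k\<in>cube m - {0}. a k * x (0 - k)"])
     (auto simp: Xtr_zero_eq[OF assms] intro!: measurable_sum_shifted_coords sum.cong)

lemma Xlin_zero_density: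
  "\<exists>p. bounded_lipschitz_density (Xlin a \<epsilon> 0) p"
proof (rule density_of_eps0_decomposition[where g="\<lambda>x. lim (\<lambda>m. \<Sum>k\<in>cube m - {0}. a k * x (0 - k))"])
  show "(\<lambda>x. lim (\<lambda>m. \<Sum>k\<in>cube m - {0}. a k * x (0 - k))) \<in> borel_measurable (PiM (- {0}) (\<lambda>_. borel))"
    by (intro borel_measurable_lim_metric measurable_sum_shifted_coords) auto
  have "AE \<omega> in M. Xlin a \<epsilon> 0 \<omega> = a 0 * \<epsilon> 0 \<omega> + lim (\<lambda>m. \<Sum>k\<in>cube m - {0}. a k * \<epsilon> (0 - k) \<omega>)"
    by (rule AE_Xlin_eq_lim) (auto simp: Xtr_zero_eq)
  moreover have "(\<lambda>m. \<Sum>k\<in>cube m - {0}. a k * (\<lambda>j\<in>- {0}. \<epsilon> j \<omega>) (0 - k))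
      = (\<lambda>m. \<Sum>k\<in>cube m - {0}. a k * \<epsilon> (0 - k) \<omega>)" for \<omega>
    by (auto intro!: sum.cong)
  ultimately show "AE \<omega> in M. Xlin a \<epsilon> 0 \<omega>
      = a 0 * \<epsilon> 0 \<omega> + lim (\<lambda>m. \<Sum>k\<in>cube m - {0}. a k * (\<lambda>j\<in>- {0}. \<epsilon> j \<omega>) (0 - k))"
    by simp
qed simp

lemma density_pair_of_two_eps:
  fixes gU gV :: "(int ^ 'd \<Rightarrow> real) \<Rightarrow> real"
  assumes j12: "j1 \<noteq> j2"
    and gU[measurable]: "gU \<in> borel_measurable (PiM (UNIV - {j1, j2}) (\<lambda>_. borel))"
    and gV[measurable]: "gV \<in> borel_measurable (PiM (UNIV - {j1, j2}) (\<lambda>_. borel))"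
  shows "\<exists>q. bounded_pair_density
     (\<lambda>\<omega>. a 0 * \<epsilon> j1 \<omega> + c * \<epsilon> j2 \<omega> + gU (\<lambda>j\<in>UNIV - {j1, j2}. \<epsilon> j \<omega>))
     (\<lambda>\<omega>. a 0 * \<epsilon> j2 \<omega> + gV (\<lambda>j\<in>UNIV - {j1, j2}. \<epsilon> j \<omega>)) q"
proof -
  define U where "U \<omega> = gU (\<lambda>j\<in>UNIV - {j1, j2}. \<epsilon> j \<omega>)" for \<omega>
  define V where "V \<omega> = gV (\<lambda>j\<in>UNIV - {j1, j2}. \<epsilon> j \<omega>)" for \<omega>
  have r: "(\<lambda>\<omega>. \<lambda>j\<in>UNIV - {j1, j2}. \<epsilon> j \<omega>) \<in> measurable M (PiM (UNIV - {j1, j2}) (\<lambda>_. borel))"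
    by (intro measurable_restrict) auto
  have Um: "U \<in> borel_measurable M" and Vm: "V \<in> borel_measurable M"
    using measurable_compose[OF r gU] measurable_compose[OF r gV] by (simp_all add: U_def[abs_def] V_def[abs_def] comp_def)
  have pem: "pe \<in> borel_measurable borel"
    using lipschitz_on_continuous_on[OF lipschitz_pe] by (rule borel_measurable_continuous_onI)
  note iv = distr_indep_two_and_rest[OF indep_eps j12 gU gV U_def V_def]
  have "\<exists>q. (\<forall>z. 0 \<le> q z) \<and>
     distributed M (lborel \<Otimes>\<^sub>M lborel) (\<lambda>\<omega>. (a 0 * \<epsilon> j1 \<omega> + c * \<epsilon> j2 \<omega> + U \<omega>, a 0 * \<epsilon> j2 \<omega> + V \<omega>))
       (\<lambda>z. ennreal (q z)) \<and> (\<forall>z. q z \<le> (B / \<bar>a 0\<bar>)^2)"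
    by (rule distributed_pair_scaled_add_indep[OF distributed_eps distributed_eps pe_nonneg pe_le pem a0 Um Vm iv])
  then show ?thesis unfolding bounded_pair_density_def U_def V_def .
qed

lemma density_pair_of_decomposition:
  fixes gU gV :: "(int ^ 'd \<Rightarrow> real) \<Rightarrow> real" and X0 X1 :: "'a \<Rightarrow> real"
  assumes i: "i \<noteq> 0"
    and [measurable]: "gU \<in> borel_measurable (PiM (UNIV - {0, i}) (\<lambda>_. borel))"
      "gV \<in> borel_measurable (PiM (UNIV - {0, i}) (\<lambda>_. borel))"
      "X0 \<in> borel_measurable M" "X1 \<in> borel_measurable M"
    and ae0: "AE \<omega> in M. X0 \<omega> = a 0 * \<epsilon> 0 \<omega> + c * \<epsilon> i \<omega> + gU (\<lambda>j\<in>UNIV - {0, i}. \<epsilon> j \<omega>)"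
    and ae1: "AE \<omega> in M. X1 \<omega> = a 0 * \<epsilon> i \<omega> + c' * \<epsilon> 0 \<omega> + gV (\<lambda>j\<in>UNIV - {0, i}. \<epsilon> j \<omega>)"
    and cc: "c = 0 \<or> c' = 0"
  shows "\<exists>q. bounded_pair_density X0 X1 q"
proof (cases "c' = 0")
  case True
  obtain q where q: "bounded_pair_density
      (\<lambda>\<omega>. a 0 * \<epsilon> 0 \<omega> + c * \<epsilon> i \<omega> + gU (\<lambda>j\<in>UNIV - {0, i}. \<epsilon> j \<omega>))
      (\<lambda>\<omega>. a 0 * \<epsilon> i \<omega> + gV (\<lambda>j\<in>UNIV - {0, i}. \<epsilon> j \<omega>)) q"
    using density_pair_of_two_eps[of 0 i gU gV c] i by auto
  have "AE \<omega> in M. (a 0 * \<epsilon> 0 \<omega> + c * \<epsilon> i \<omega> + gU (\<lambda>j\<in>UNIV - {0, i}. \<epsilon> j \<omega>),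
      a 0 * \<epsilon> i \<omega> + gV (\<lambda>j\<in>UNIV - {0, i}. \<epsilon> j \<omega>)) = (X0 \<omega>, X1 \<omega>)"
    using ae0 ae1 True by auto
  then have "distributed M (lborel \<Otimes>\<^sub>M lborel) (\<lambda>\<omega>. (X0 \<omega>, X1 \<omega>)) (\<lambda>z. ennreal (q z))"
    by (rule distributed_AE_cong[OF q[unfolded bounded_pair_density_def, THEN conjunct2, THEN conjunct1]]) simp
  then show ?thesis using q unfolding bounded_pair_density_def by blast
next
  case False
  then have c0: "c = 0" using cc by auto
  have s: "UNIV - {i, 0} = UNIV - {0, i}" by auto
  obtain q where q: "bounded_pair_density
      (\<lambda>\<omega>. a 0 * \<epsilon> i \<omega> + c' * \<epsilon> 0 \<omega> + gV (\<lambda>j\<in>UNIV - {0, i}. \<epsilon> j \<omega>))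
      (\<lambda>\<omega>. a 0 * \<epsilon> 0 \<omega> + gU (\<lambda>j\<in>UNIV - {0, i}. \<epsilon> j \<omega>)) q"
    using density_pair_of_two_eps[of i 0 gV gU c'] i unfolding s by auto
  have sw: "distributed M (lborel \<Otimes>\<^sub>M lborel)
       (\<lambda>\<omega>. (a 0 * \<epsilon> 0 \<omega> + gU (\<lambda>j\<in>UNIV - {0, i}. \<epsilon> j \<omega>),
              a 0 * \<epsilon> i \<omega> + c' * \<epsilon> 0 \<omega> + gV (\<lambda>j\<in>UNIV - {0, i}. \<epsilon> j \<omega>))) (\<lambda>(x, y). ennreal (q (y, x)))"
    using q unfolding bounded_pair_density_def
    by (intro distributed_swap[OF sigma_finite_lborel sigma_finite_lborel]) auto
  have swap: "(\<lambda>(x, y). ennreal (q (y, x))) = (\<lambda>z. ennreal (q (snd z, fst z)))" by auto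
  have "AE \<omega> in M. (a 0 * \<epsilon> 0 \<omega> + gU (\<lambda>j\<in>UNIV - {0, i}. \<epsilon> j \<omega>),
      a 0 * \<epsilon> i \<omega> + c' * \<epsilon> 0 \<omega> + gV (\<lambda>j\<in>UNIV - {0, i}. \<epsilon> j \<omega>)) = (X0 \<omega>, X1 \<omega>)"
    using ae0 ae1 c0 by auto
  then have "distributed M (lborel \<Otimes>\<^sub>M lborel) (\<lambda>\<omega>. (X0 \<omega>, X1 \<omega>)) (\<lambda>z. ennreal (q (snd z, fst z)))"
    by (rule distributed_AE_cong[OF sw[unfolded swap]]) simp
  then show ?thesis using q unfolding bounded_pair_density_def
    by (intro exI[of _ "\<lambda>z. q (snd z, fst z)"]) auto
qed

\<comment> \<open>\<open>X\<^sub>0\<^sub>,\<^sub>m\<close> and \<open>X\<^sub>i\<^sub>,\<^sub>m\<close> without their \<open>\<epsilon>\<^sub>0\<close>- and \<open>\<epsilon>\<^sub>i\<close>-terms, as functions of the other innovations.\<close>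
definition rest_zero :: "int ^ 'd \<Rightarrow> nat \<Rightarrow> (int ^ 'd \<Rightarrow> real) \<Rightarrow> real" where
  "rest_zero i m x = (\<Sum>k\<in>cube m - {0, -i}. a k * x (0 - k))"

definition rest_at :: "int ^ 'd \<Rightarrow> nat \<Rightarrow> (int ^ 'd \<Rightarrow> real) \<Rightarrow> real" where
  "rest_at i m x = (\<Sum>k\<in>cube m - {0, i}. a k * x (i - k))"

lemma measurable_rest_zero: "rest_zero i m \<in> borel_measurable (PiM (UNIV - {0, i}) (\<lambda>_. borel))"
  unfolding rest_zero_def[abs_def] by (rule measurable_sum_shifted_coords) (auto simp: minus_equation_iff[of _ i])

lemma measurable_rest_at: "rest_at i m \<in> borel_measurable (PiM (UNIV - {0, i}) (\<lambda>_. borel))"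
  unfolding rest_at_def[abs_def] by (rule measurable_sum_shifted_coords) auto

lemma Xtr_zero_eq_pair:
  assumes i: "i \<noteq> 0" and m: "m \<ge> 1"
  shows "Xtr a \<epsilon> 0 m \<omega> = a 0 * \<epsilon> 0 \<omega> + (if -i \<in> cube m then a (-i) else 0) * \<epsilon> i \<omega>
      + rest_zero i m (\<lambda>j\<in>UNIV - {0, i}. \<epsilon> j \<omega>)"
proof -
  have "Xtr a \<epsilon> 0 m \<omega> = a 0 * \<epsilon> (0 - 0) \<omega> + (if -i \<in> cube m then a (-i) * \<epsilon> (0 - - i) \<omega> else 0)
      + (\<Sum>k\<in>cube m - {0, -i}. a k * \<epsilon> (0 - k) \<omega>)"
    unfolding Xtr_def by (rule sum_remove2[OF finite_cube zero_in_cube[OF m]]) (use i in auto)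
  moreover have "(\<Sum>k\<in>cube m - {0, -i}. a k * \<epsilon> (0 - k) \<omega>) = rest_zero i m (\<lambda>j\<in>UNIV - {0, i}. \<epsilon> j \<omega>)"
    unfolding rest_zero_def by (intro sum.cong) (auto simp: minus_equation_iff[of _ i])
  ultimately show ?thesis by simp
qed

lemma Xtr_eq_pair:
  assumes i: "i \<noteq> 0" and m: "m \<ge> 1"
  shows "Xtr a \<epsilon> i m \<omega> = a 0 * \<epsilon> i \<omega> + (if i \<in> cube m then a i else 0) * \<epsilon> 0 \<omega>
      + rest_at i m (\<lambda>j\<in>UNIV - {0, i}. \<epsilon> j \<omega>)"
proof -
  have "Xtr a \<epsilon> i m \<omega> = a 0 * \<epsilon> (i - 0) \<omega> + (if i \<in> cube m then a i * \<epsilon> (i - i) \<omega> else 0)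
      + (\<Sum>k\<in>cube m - {0, i}. a k * \<epsilon> (i - k) \<omega>)"
    unfolding Xtr_def by (rule sum_remove2[OF finite_cube zero_in_cube[OF m]]) (use i in auto)
  moreover have "(\<Sum>k\<in>cube m - {0, i}. a k * \<epsilon> (i - k) \<omega>) = rest_at i m (\<lambda>j\<in>UNIV - {0, i}. \<epsilon> j \<omega>)"
    unfolding rest_at_def by (intro sum.cong) auto
  ultimately show ?thesis by simp
qed

lemma Xtr_pair_density:
  assumes i: "i \<noteq> 0" and m: "m \<ge> 1"
  shows "\<exists>q. bounded_pair_density (Xtr a \<epsilon> 0 m) (Xtr a \<epsilon> i m) q"
proof (rule density_pair_of_decomposition[OF i measurable_rest_zero measurable_rest_at measurable_Xtr measurable_Xtr])
  show "AE \<omega> in M. Xtr a \<epsilon> 0 m \<omega> = a 0 * \<epsilon> 0 \<omega> + (if -i \<in> cube m then a (-i) else 0) * \<epsilon> i \<omega>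
      + rest_zero i m (\<lambda>j\<in>UNIV - {0, i}. \<epsilon> j \<omega>)"
    using Xtr_zero_eq_pair[OF i m] by simp
  show "AE \<omega> in M. Xtr a \<epsilon> i m \<omega> = a 0 * \<epsilon> i \<omega> + (if i \<in> cube m then a i else 0) * \<epsilon> 0 \<omega>
      + rest_at i m (\<lambda>j\<in>UNIV - {0, i}. \<epsilon> j \<omega>)"
    using Xtr_eq_pair[OF i m] by simp
  show "(if -i \<in> cube m then a (-i) else 0) = 0 \<or> (if i \<in> cube m then a i else 0) = 0"
    using vge_zero_antisym[of i] vge_zero_if_in_cube[of i m] vge_zero_if_in_cube[of "-i" m] i by auto
qed

lemma Xlin_pair_density:
  assumes i: "i \<noteq> 0"
  shows "\<exists>q. bounded_pair_density (Xlin a \<epsilon> 0) (Xlin a \<epsilon> i) q"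
proof (rule density_pair_of_decomposition[OF i borel_measurable_lim_metric[OF measurable_rest_zero]
      borel_measurable_lim_metric[OF measurable_rest_at] measurable_Xlin measurable_Xlin])
  show "AE \<omega> in M. Xlin a \<epsilon> 0 \<omega> = a 0 * \<epsilon> 0 \<omega> + (if vge (-i) 0 then a (-i) else 0) * \<epsilon> i \<omega>
      + lim (\<lambda>m. rest_zero i m (\<lambda>j\<in>UNIV - {0, i}. \<epsilon> j \<omega>))"
    by (rule AE_Xlin_eq_lim[OF Xtr_zero_eq_pair[OF i]]) (assumption, intro tendsto_intros tendsto_if_in_cube)
  show "AE \<omega> in M. Xlin a \<epsilon> i \<omega> = a 0 * \<epsilon> i \<omega> + (if vge i 0 then a i else 0) * \<epsilon> 0 \<omega>
      + lim (\<lambda>m. rest_at i m (\<lambda>j\<in>UNIV - {0, i}. \<epsilon> j \<omega>))"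
    by (rule AE_Xlin_eq_lim[OF Xtr_eq_pair[OF i]]) (assumption, intro tendsto_intros tendsto_if_in_cube)
  show "(if vge (-i) 0 then a (-i) else 0) = 0 \<or> (if vge i 0 then a i else 0) = 0"
    using vge_zero_antisym[of i] i by auto
qed

lemma conditionD: "conditionD M a \<epsilon>"
proof -
  obtain p where p: "bounded_lipschitz_density (Xlin a \<epsilon> 0) p"
    using Xlin_zero_density by blast
  define pm where "pm m = (SOME p. bounded_lipschitz_density (Xtr a \<epsilon> 0 m) p)" for m
  have pm: "bounded_lipschitz_density (Xtr a \<epsilon> 0 m) (pm m)" if "m \<ge> 1" for m
    unfolding pm_def using Xtr_zero_density[OF that] by (rule someI_ex)
  define q where "q i = (SOME q. bounded_pair_density (Xlin a \<epsilon> 0) (Xlin a \<epsilon> i) q)" for i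
  have q: "bounded_pair_density (Xlin a \<epsilon> 0) (Xlin a \<epsilon> i) (q i)" if "i \<noteq> 0" for i
    unfolding q_def using Xlin_pair_density[OF that] by (rule someI_ex)
  define qm where "qm m i = (SOME q. bounded_pair_density (Xtr a \<epsilon> 0 m) (Xtr a \<epsilon> i m) q)" for m i
  have qm: "bounded_pair_density (Xtr a \<epsilon> 0 m) (Xtr a \<epsilon> i m) (qm m i)" if "i \<noteq> 0" "m \<ge> 1" for m i
    unfolding qm_def using Xtr_pair_density[OF that] by (rule someI_ex)
  have "bdd_above (range p)" "bdd_above {pm m x | m x. m \<ge> 1}"
    using p pm unfolding bounded_lipschitz_density_def by (auto intro!: bdd_aboveI[of _ "B / \<bar>a 0\<bar>"])
  moreover have "bdd_above {q i xy | i xy. i \<noteq> 0}" "bdd_above {qm m i xy | m i xy. m \<ge> 1 \<and> i \<noteq> 0}"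
    using q qm unfolding bounded_pair_density_def by (auto intro!: bdd_aboveI[of _ "(B / \<bar>a 0\<bar>)^2"])
  ultimately show ?thesis
    using p pm q qm unfolding conditionD_def bounded_lipschitz_density_def bounded_pair_density_def
    by (intro conjI exI[of _ p] exI[of _ pm] exI[of _ "L / (a 0)^2"] exI[of _ q] exI[of _ qm]) auto
qed

end

theorem lemma1:
  fixes M :: "'a measure" and \<epsilon> :: "int ^ 'd::finite \<Rightarrow> 'a \<Rightarrow> real"
    and a :: "int ^ 'd \<Rightarrow> real" and pe :: "real \<Rightarrow> real"
  assumes "prob_space M"
    and "\<forall>i. \<epsilon> i \<in> borel_measurable M"
    and "prob_space.indep_vars M (\<lambda>_. borel) \<epsilon> UNIV"
    and "\<forall>i. distr M borel (\<epsilon> i) = distr M borel (\<epsilon> 0)"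
    and "integrable M (\<epsilon> 0)" and "integral\<^sup>L M (\<epsilon> 0) = 0"
    and "integrable M (\<lambda>\<omega>. (\<epsilon> 0 \<omega>)^2)"
    and "(\<lambda>k. (a k)^2) summable_on {k. vge k 0}"
    and "a 0 \<noteq> 0"
    and "\<forall>x. 0 \<le> pe x"
    and "distributed M lborel (\<epsilon> 0) (\<lambda>x. ennreal (pe x))"
    and "\<exists>L. lipschitz_on L UNIV pe"
  shows "conditionD M a \<epsilon>"
proof -
  interpret prob_space M by fact
  obtain L where Lip: "lipschitz_on L UNIV pe" using assms(12) by blast
  have "prob_space (density lborel (\<lambda>x. ennreal (pe x)))"
    using assms(11) prob_space_distr[of "\<epsilon> 0" lborel] by (simp add: distributed_def)
  then obtain B where "\<forall>x. pe x \<le> B"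
    using lipschitz_density_bounded[OF _ _ Lip] assms(10) by blast
  then interpret linear_field M \<epsilon> a pe L B
    by unfold_locales (use assms Lip in auto)
  show ?thesis by (rule conditionD)
qed

end
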